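(* Let the setting and the algorithm RandProx be as in the context, with $g=0$. Suppose that $\mu_f>0$, and that $\lambda_{\min}(KK^* )>0$ or $\mu_{h^*}>0$. Suppose that $0<\gamma<\frac{2}{L_f}$, $\tau>0$ and $\gamma\tau\big((1-\zeta)\|K\|^2+\omega_{\mathrm{ran}}\big)\le 1$. For $t\ge0$ let $\Psi^t:=\frac{1}{\gamma}\|x^t-x^\star\|^2+(1+\omega)\big(\frac{1}{\tau}+2\mu_{h^*}\big)\|u^t-u^\star\|^2$, where $x^\star,u^\star$ are the unique primal and dual solutions. Then for every $t\ge0$, $\mathbb{E}[\Psi^t]\le c^t\Psi^0$, where $$c:=\max\left((1-\gamma\mu_f)^2,\ (\gamma L_f-1)^2,\ 1-\frac{2\tau\mu_{h^*}+\gamma\tau\lambda_{\min}(KK^* )}{(1+\omega)(1+2\tau\mu_{h^*})}\right)<1.$$ Moreover, $(x^t)$ and $(\hat{x}^t)$ both converge to $x^\star$ and $(u^t)$ converges to $u^\star$, almost surely.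
   Context: $\mathcal{X},\mathcal{U}$ are finite-dimensional real Hilbert spaces, $K:\mathcal{X}\to\mathcal{U}$ a nonzero linear operator with adjoint $K^*$, $\lambda_{\min}(KK^* )$ the smallest eigenvalue of $KK^*$. $f:\mathcal{X}\to\mathbb{R}$ convex and $L_f$-smooth ($\nabla f$ $L_f$-Lipschitz); $h:\mathcal{U}\to\mathbb{R}\cup\{+\infty\}$ proper closed convex with conjugate $h^*$. A convex $\phi$ is $\mu_\phi$-strongly convex ($\mu_\phi\ge0$) if $\phi-\frac{\mu_\phi}{2}\|\cdot\|^2$ is convex; $\mu_f,\mu_{h^*}\ge0$ are such constants. $\mathrm{prox}_{\gamma\phi}(x):=\arg\min_{x'}(\gamma\phi(x')+\frac12\|x'-x\|^2)$. Primal problem: minimize $f(x)+h(Kx)$; dual: minimize $f^*(-K^*u)+h^*(u)$. It is assumed there exists $(x^\star,u^\star)$ with $0\in\nabla f(x^\star)+K^*u^\star$, $0\in-Kx^\star+\partial h^*(u^\star)$. Algorithm RandProx (with $g=0$): inputs $x^0,u^0,\gamma>0,\tau>0,\omega\ge0$; $v^0:=K^*u^0$; for $t\ge0$: $\hat{x}^t:=x^t-\gamma\nabla f(x^t)-\gamma v^t$; $u^{t+1}:=u^t+\frac{1}{1+\omega}\mathcal{R}^t\big(\mathrm{prox}_{\tau h^*}(u^t+\tau K\hat{x}^t)-u^t\big)$; $v^{t+1}:=K^*u^{t+1}$; $x^{t+1}:=\hat{x}^t-\gamma(1+\omega)(v^{t+1}-v^t)$. With $\mathcal{F}_t$ the $\sigma$-algebra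 generated by $(x^0,u^0),\dots,(x^t,u^t)$ and $r^t:=\mathrm{prox}_{\tau h^*}(u^t+\tau K\hat{x}^t)-u^t$, the random estimate $\mathcal{R}^t(r^t)$ satisfies $\mathbb{E}[\mathcal{R}^t(r^t)\mid\mathcal{F}_t]=r^t$, $\mathbb{E}[\|\mathcal{R}^t(r^t)-r^t\|^2\mid\mathcal{F}_t]\le\omega\|r^t\|^2$, $\mathbb{E}[\|K^*(\mathcal{R}^t(r^t)-r^t)\|^2\mid\mathcal{F}_t]\le\omega_{\mathrm{ran}}\|r^t\|^2-\zeta\|K^*r^t\|^2$, for constants $\omega_{\mathrm{ran}}\ge0$, $\zeta\in[0,1]$. *)

theory Defs
  imports "HOL-Analysis.Analysis" "HOL-Probability.Probability"
begin

definition proper_fun :: "('a \<Rightarrow> ereal) \<Rightarrow> bool" where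
  "proper_fun \<phi> \<longleftrightarrow> (\<forall>x. \<phi> x \<noteq> -\<infinity>) \<and> (\<exists>x. \<phi> x < \<infinity>)"

definition convex_fun :: "('a::real_vector \<Rightarrow> ereal) \<Rightarrow> bool" where
  "convex_fun \<phi> \<longleftrightarrow> convex {(x, t::real). \<phi> x \<le> ereal t}"

definition closed_fun :: "('a::topological_space \<Rightarrow> ereal) \<Rightarrow> bool" where
  "closed_fun \<phi> \<longleftrightarrow> closed {(x, t::real). \<phi> x \<le> ereal t}"

definition strongly_convex_fun :: "real \<Rightarrow> ('a::real_normed_vector \<Rightarrow> ereal) \<Rightarrow> bool" where
  "strongly_convex_fun \<mu> \<phi> \<longleftrightarrow> convex_fun (\<lambda>x. \<phi> x - ereal (\<mu> / 2 * (norm x)\<^sup>2))"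

definition fconj :: "('a::real_inner \<Rightarrow> ereal) \<Rightarrow> 'a \<Rightarrow> ereal" where
  "fconj h u = (SUP v. ereal (u \<bullet> v) - h v)"

definition prox :: "real \<Rightarrow> ('a::real_normed_vector \<Rightarrow> ereal) \<Rightarrow> 'a \<Rightarrow> 'a" where
  "prox \<gamma> \<phi> x = (SOME p. \<forall>q. ereal \<gamma> * \<phi> p + ereal ((norm (p - x))\<^sup>2 / 2)
                              \<le> ereal \<gamma> * \<phi> q + ereal ((norm (q - x))\<^sup>2 / 2))"

definition subdiff :: "('a::real_inner \<Rightarrow> ereal) \<Rightarrow> 'a \<Rightarrow> 'a set" where
  "subdiff \<phi> u = {g. \<phi> u \<noteq> \<infinity> \<and> (\<forall>v. \<phi> u + ereal (g \<bullet> (v - u)) \<le> \<phi> v)}"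

definition lambda_min :: "('a::real_vector \<Rightarrow> 'a) \<Rightarrow> real" where
  "lambda_min A = Min {l. \<exists>v. v \<noteq> 0 \<and> A v = l *\<^sub>R v}"

definition natural_filtration ::
    "'s measure \<Rightarrow> (nat \<Rightarrow> 's \<Rightarrow> 'b::topological_space) \<Rightarrow> nat \<Rightarrow> 's measure" where
  "natural_filtration M X t =
     sigma (space M) {X i -` A \<inter> space M | i A. i \<le> t \<and> A \<in> sets borel}"

end

theory Submission
  imports Defs
begin

text \<open>Write the random dual increment as \<open>R = r + D\<close>, where \<open>r\<close> is the prox residual and \<open>D\<close> has
  conditional mean zero given the past. Expanding \<open>\<Psi>\<close> at the next iterate, the term linear in \<open>D\<close>
  has expectation zero and the quadratic ones are bounded by the variance assumptions, which leaves
  a deterministic expression. That expression is at most \<open>c \<Psi>\<close>: the gradient step contracts by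
  \<open>max ((1 - \<gamma> \<mu>\<^sub>f)\<^sup>2) ((\<gamma> L\<^sub>f - 1)\<^sup>2)\<close> (Baillon--Haddad), the prox step is strongly monotone
  relative to the saddle point, the step-size condition absorbs the residual terms, and
  \<open>\<lambda>\<^sub>m\<^sub>i\<^sub>n(K K\<^sup>*)\<close> controls \<open>\<parallel>K\<^sup>* (u - u*)\<parallel>\<^sup>2\<close>. Hence \<open>E \<Psi>\<^sup>t \<le> c\<^sup>t \<Psi>\<^sup>0\<close>; these bounds are summable,
  so \<open>\<Psi>\<^sup>t \<rightarrow> 0\<close> almost surely.\<close>

lemma power2_norm_diff:
  fixes a b :: "'a::real_inner"
  shows "(norm (a - b))\<^sup>2 = (norm a)\<^sup>2 - 2 * (a \<bullet> b) + (norm b)\<^sup>2"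
  unfolding power2_norm_eq_inner by (simp add: inner_diff_left inner_diff_right inner_commute)

lemma power2_norm_add_scaleR:
  fixes a b :: "'a::real_inner"
  shows "(norm (a + t *\<^sub>R b))\<^sup>2 = (norm a)\<^sup>2 + 2 * t * (a \<bullet> b) + t\<^sup>2 * (norm b)\<^sup>2"
  unfolding power2_norm_eq_inner
  by (simp add: inner_add_left inner_add_right inner_commute power2_eq_square algebra_simps)

lemma norm_le_if_sq_le_inner:
  fixes d w :: "'a::real_inner"
  assumes "(norm d)\<^sup>2 \<le> w \<bullet> d"
  shows "norm d \<le> norm w"
proof -
  have "norm d * norm d \<le> norm w * norm d"
    using assms norm_cauchy_schwarz[of w d] by (simp add: power2_eq_square)
  then show ?thesis by (cases "d = 0") auto
qed

section \<open>Smooth strongly convex functions\<close>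

lemma convex_on_gradient_ineq:
  fixes f :: "'a::real_inner \<Rightarrow> real"
  assumes convex: "convex_on UNIV f"
    and grad: "\<And>y. (f has_derivative (\<lambda>d. G y \<bullet> d)) (at y)"
  shows "f x + G x \<bullet> (y - x) \<le> f y"
proof -
  define \<phi> where "\<phi> t = f (x + t *\<^sub>R (y - x))" for t :: real
  have "convex_on UNIV \<phi>"
  proof (rule convex_onI)
    fix t a b :: real assume t: "0 < t" "t < 1"
    have "x + ((1 - t) * a + t * b) *\<^sub>R (y - x)
        = (1 - t) *\<^sub>R (x + a *\<^sub>R (y - x)) + t *\<^sub>R (x + b *\<^sub>R (y - x))"
      by (simp add: algebra_simps)
    then show "\<phi> ((1 - t) *\<^sub>R a + t *\<^sub>R b) \<le> (1 - t) * \<phi> a + t * \<phi> b"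
      unfolding \<phi>_def using convex_onD[OF convex, of t] t by simp
  qed simp
  moreover have "(\<phi> has_real_derivative G x \<bullet> (y - x)) (at 0)"
  proof -
    have "((\<lambda>t. x + t *\<^sub>R (y - x)) has_derivative (\<lambda>t. t *\<^sub>R (y - x))) (at 0)"
      by (auto intro!: derivative_eq_intros)
    from has_derivative_compose[OF this grad]
    show ?thesis
      unfolding \<phi>_def has_field_derivative_def
      by (rule has_derivative_eq_rhs) (auto simp: fun_eq_iff)
  qed
  ultimately have "G x \<bullet> (y - x) * (1 - 0) \<le> \<phi> 1 - \<phi> 0"
    using convex_on_imp_above_tangent[of UNIV \<phi> 0 1] by simp
  then show ?thesis unfolding \<phi>_def by simp
qed

lemma descent_lemma:
  fixes f :: "'a::real_inner \<Rightarrow> real"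
  assumes grad: "\<And>y. (f has_derivative (\<lambda>d. G y \<bullet> d)) (at y)"
    and bound: "\<And>y z. (G y - G z) \<bullet> (y - z) \<le> L * (norm (y - z))\<^sup>2"
  shows "f y \<le> f x + G x \<bullet> (y - x) + L / 2 * (norm (y - x))\<^sup>2"
proof -
  define \<phi> where "\<phi> t = f (x + t *\<^sub>R (y - x)) - t * (G x \<bullet> (y - x)) - L / 2 * t\<^sup>2 * (norm (y - x))\<^sup>2"
    for t :: real
  have "\<phi> 1 \<le> \<phi> 0"
  proof (rule DERIV_nonpos_imp_nonincreasing[of 0 1 \<phi>])
    fix t :: real assume t: "0 \<le> t" "t \<le> 1"
    define z where "z = x + t *\<^sub>R (y - x)"
    have "((\<lambda>t. x + t *\<^sub>R (y - x)) has_derivative (\<lambda>s. s *\<^sub>R (y - x))) (at t)"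
      by (auto intro!: derivative_eq_intros)
    from has_derivative_compose[OF this grad]
    have "((\<lambda>t. f (x + t *\<^sub>R (y - x))) has_real_derivative G z \<bullet> (y - x)) (at t)"
      unfolding z_def has_field_derivative_def
      by (rule has_derivative_eq_rhs) (auto simp: fun_eq_iff)
    then have "(\<phi> has_real_derivative
        G z \<bullet> (y - x) - G x \<bullet> (y - x) - L / 2 * (2 * t) * (norm (y - x))\<^sup>2) (at t)"
      unfolding \<phi>_def by (auto intro!: derivative_eq_intros)
    moreover have "(G z - G x) \<bullet> (y - x) \<le> t * L * (norm (y - x))\<^sup>2"
    proof (cases "t = 0")
      case False
      have "z - x = t *\<^sub>R (y - x)" by (simp add: z_def)
      then have "(G z - G x) \<bullet> (t *\<^sub>R (y - x)) \<le> L * (norm (t *\<^sub>R (y - x)))\<^sup>2"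
        using bound[of z x] by simp
      then have "t * ((G z - G x) \<bullet> (y - x)) \<le> t * (t * L * (norm (y - x))\<^sup>2)"
        using t by (simp add: power_mult_distrib power2_eq_square mult_ac)
      then show ?thesis using t False by simp
    qed (simp add: z_def)
    ultimately show "\<exists>d. (\<phi> has_real_derivative d) (at t) \<and> d \<le> 0"
      by (intro exI conjI) (auto simp: inner_diff_left mult_ac)
  qed simp
  then show ?thesis unfolding \<phi>_def by simp
qed

text \<open>Baillon--Haddad: compare the gradient inequality at \<open>z\<close> with the descent lemma at
  \<open>y - (G y - G z) /\<^sub>R \<beta>\<close>.\<close>

lemma gradient_cocoercive:
  fixes g :: "'a::real_inner \<Rightarrow> real"
  assumes convex: "convex_on UNIV g"
    and grad: "\<And>y. (g has_derivative (\<lambda>d. G y \<bullet> d)) (at y)"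
    and bound: "\<And>y z. (G y - G z) \<bullet> (y - z) \<le> \<beta> * (norm (y - z))\<^sup>2"
    and "\<beta> > 0"
  shows "(norm (G y - G z))\<^sup>2 \<le> \<beta> * ((G y - G z) \<bullet> (y - z))"
proof -
  have sharpened: "g z + G z \<bullet> (y - z) + (norm (G y - G z))\<^sup>2 / (2 * \<beta>) \<le> g y" for y z
  proof -
    define \<Delta> where "\<Delta> = G y - G z"
    define y' where "y' = y - (1 / \<beta>) *\<^sub>R \<Delta>"
    have "g z + G z \<bullet> (y' - z) \<le> g y'"
      by (rule convex_on_gradient_ineq[OF convex grad])
    moreover have "g y' \<le> g y + G y \<bullet> (y' - y) + \<beta> / 2 * (norm (y' - y))\<^sup>2"
      by (rule descent_lemma[OF grad bound])
    moreover have "G z \<bullet> (y' - z) = G z \<bullet> (y - z) - (G z \<bullet> \<Delta>) / \<beta>"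
      unfolding y'_def by (simp add: inner_diff_right)
    moreover have "G y \<bullet> (y' - y) = - (G y \<bullet> \<Delta>) / \<beta>"
      unfolding y'_def by simp
    moreover have "\<beta> / 2 * (norm (y' - y))\<^sup>2 = (norm \<Delta>)\<^sup>2 / (2 * \<beta>)"
      unfolding y'_def using \<open>\<beta> > 0\<close> by (simp add: power_divide power2_eq_square)
    moreover have "(G y \<bullet> \<Delta>) / \<beta> - (G z \<bullet> \<Delta>) / \<beta> = (norm \<Delta>)\<^sup>2 / \<beta>"
      unfolding \<Delta>_def power2_norm_eq_inner by (simp add: inner_diff_left diff_divide_distrib)
    moreover have "(norm \<Delta>)\<^sup>2 / \<beta> - (norm \<Delta>)\<^sup>2 / (2 * \<beta>) = (norm \<Delta>)\<^sup>2 / (2 * \<beta>)"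
      by (simp add: field_simps)
    ultimately show ?thesis unfolding \<Delta>_def by linarith
  qed
  from sharpened[of y z] sharpened[of z y]
  have "(norm (G y - G z))\<^sup>2 / \<beta> \<le> (G y - G z) \<bullet> (y - z)"
    by (simp add: norm_minus_commute inner_diff_left inner_diff_right inner_commute
        add_divide_distrib[symmetric] algebra_simps)
  then show ?thesis using \<open>\<beta> > 0\<close> by (simp add: field_simps)
qed

lemma norm_diff_le_of_cocoercive:
  fixes d e :: "'a::real_inner"
  assumes "\<beta> \<ge> 0" "\<gamma> \<ge> 0" and cocoercive: "(norm e)\<^sup>2 \<le> \<beta> * (d \<bullet> e)"
  shows "(norm (a *\<^sub>R d - \<gamma> *\<^sub>R e))\<^sup>2 \<le> max (a\<^sup>2) ((a - \<gamma> * \<beta>)\<^sup>2) * (norm d)\<^sup>2"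
proof -
  \<comment> \<open>cocoercivity places \<open>e\<close> in the ball of radius \<open>\<beta>/2 \<parallel>d\<parallel>\<close> around \<open>(\<beta>/2) d\<close>\<close>
  define w where "w = e - (\<beta> / 2) *\<^sub>R d"
  have "(norm w)\<^sup>2 \<le> (\<beta> / 2 * norm d)\<^sup>2"
    using cocoercive \<open>\<beta> \<ge> 0\<close> unfolding w_def power2_norm_diff
    by (simp add: power_mult_distrib inner_commute algebra_simps)
  then have w: "norm w \<le> \<beta> / 2 * norm d"
    using \<open>\<beta> \<ge> 0\<close> by (simp add: power2_le_iff_abs_le)
  have "norm (a *\<^sub>R d - \<gamma> *\<^sub>R e) = norm ((a - \<gamma> * \<beta> / 2) *\<^sub>R d - \<gamma> *\<^sub>R w)"
    unfolding w_def by (simp add: algebra_simps)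
  also have "\<dots> \<le> norm ((a - \<gamma> * \<beta> / 2) *\<^sub>R d) + norm (\<gamma> *\<^sub>R w)"
    by (rule norm_triangle_ineq4)
  also have "\<dots> \<le> \<bar>a - \<gamma> * \<beta> / 2\<bar> * norm d + \<gamma> * (\<beta> / 2 * norm d)"
    using mult_left_mono[OF w \<open>\<gamma> \<ge> 0\<close>] \<open>\<gamma> \<ge> 0\<close> by simp
  also have "\<dots> = (\<bar>a - \<gamma> * \<beta> / 2\<bar> + \<gamma> * \<beta> / 2) * norm d"
    by (simp add: algebra_simps)
  also have "\<bar>a - \<gamma> * \<beta> / 2\<bar> + \<gamma> * \<beta> / 2 = max \<bar>a\<bar> \<bar>a - \<gamma> * \<beta>\<bar>"
    using mult_nonneg_nonneg[OF \<open>\<gamma> \<ge> 0\<close> \<open>\<beta> \<ge> 0\<close>] by (auto simp: max_def abs_if)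
  finally have "(norm (a *\<^sub>R d - \<gamma> *\<^sub>R e))\<^sup>2 \<le> (max \<bar>a\<bar> \<bar>a - \<gamma> * \<beta>\<bar> * norm d)\<^sup>2"
    by (rule power_mono) simp
  also have "\<dots> = max (a\<^sup>2) ((a - \<gamma> * \<beta>)\<^sup>2) * (norm d)\<^sup>2"
    by (simp add: power_mult_distrib max_def abs_le_square_iff)
  finally show ?thesis .
qed

lemma has_derivative_minus_sq_norm:
  fixes f :: "'a::real_inner \<Rightarrow> real"
  assumes "(f has_derivative (\<lambda>d. gf y \<bullet> d)) (at y)"
  shows "((\<lambda>y. f y - \<mu> / 2 * (norm y)\<^sup>2) has_derivative (\<lambda>d. (gf y - \<mu> *\<^sub>R y) \<bullet> d)) (at y)"
  unfolding power2_norm_eq_inner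
  by (rule has_derivative_eq_rhs[OF has_derivative_diff[OF assms has_derivative_mult_right[OF
        has_derivative_inner[OF has_derivative_ident has_derivative_ident]]]])
    (auto simp: fun_eq_iff inner_diff_left inner_diff_right inner_commute)

lemma gradient_strongly_monotone:
  fixes f :: "'a::real_inner \<Rightarrow> real"
  assumes grad: "\<And>y. (f has_derivative (\<lambda>d. gf y \<bullet> d)) (at y)"
    and strongly_convex: "convex_on UNIV (\<lambda>y. f y - \<mu> / 2 * (norm y)\<^sup>2)"
  shows "\<mu> * (norm (x - y))\<^sup>2 \<le> (gf x - gf y) \<bullet> (x - y)"
proof -
  have "((\<lambda>y. f y - \<mu> / 2 * (norm y)\<^sup>2) has_derivative (\<lambda>d. (gf y - \<mu> *\<^sub>R y) \<bullet> d)) (at y)" for y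
    by (rule has_derivative_minus_sq_norm[OF grad])
  from convex_on_gradient_ineq[OF strongly_convex this, of x y]
    convex_on_gradient_ineq[OF strongly_convex this, of y x]
  show ?thesis
    by (simp add: power2_norm_eq_inner inner_diff_left inner_diff_right inner_commute algebra_simps)
qed

lemma strong_convexity_le_smoothness:
  fixes f :: "'a::euclidean_space \<Rightarrow> real"
  assumes grad: "\<And>y. (f has_derivative (\<lambda>d. gf y \<bullet> d)) (at y)"
    and lipschitz: "\<And>y z. norm (gf y - gf z) \<le> L * norm (y - z)"
    and strongly_convex: "convex_on UNIV (\<lambda>y. f y - \<mu> / 2 * (norm y)\<^sup>2)"
  shows "\<mu> \<le> L"
proof -
  obtain b :: 'a where b: "b \<in> Basis" using nonempty_Basis by blast
  have "\<mu> * (norm (b - 0))\<^sup>2 \<le> (gf b - gf 0) \<bullet> (b - 0)"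
    by (rule gradient_strongly_monotone[OF grad strongly_convex])
  also have "\<dots> \<le> norm (gf b - gf 0) * norm (b - 0)"
    by (rule norm_cauchy_schwarz)
  also have "\<dots> \<le> L * (norm (b - 0))\<^sup>2"
    using mult_right_mono[OF lipschitz[of b 0] norm_ge_zero[of "b - 0"]]
    by (simp add: power2_eq_square)
  finally show ?thesis using b by simp
qed

lemma strongly_convex_gradient_cocoercive:
  fixes f :: "'a::euclidean_space \<Rightarrow> real"
  assumes grad: "\<And>y. (f has_derivative (\<lambda>d. gf y \<bullet> d)) (at y)"
    and lipschitz: "\<And>y z. norm (gf y - gf z) \<le> L * norm (y - z)"
    and strongly_convex: "convex_on UNIV (\<lambda>y. f y - \<mu> / 2 * (norm y)\<^sup>2)"
  defines "G \<equiv> \<lambda>y. gf y - \<mu> *\<^sub>R y"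
  shows "(norm (G x - G y))\<^sup>2 \<le> (L - \<mu>) * ((x - y) \<bullet> (G x - G y))"
proof -
  have G_grad: "((\<lambda>y. f y - \<mu> / 2 * (norm y)\<^sup>2) has_derivative (\<lambda>d. G y \<bullet> d)) (at y)" for y
    unfolding G_def by (rule has_derivative_minus_sq_norm[OF grad])
  have G_bound: "(G y - G z) \<bullet> (y - z) \<le> (L - \<mu>) * (norm (y - z))\<^sup>2" for y z
  proof -
    have "(gf y - gf z) \<bullet> (y - z) \<le> norm (gf y - gf z) * norm (y - z)"
      by (rule norm_cauchy_schwarz)
    also have "\<dots> \<le> L * (norm (y - z))\<^sup>2"
      using mult_right_mono[OF lipschitz[of y z] norm_ge_zero[of "y - z"]]
      by (simp add: power2_eq_square)
    finally show ?thesis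
      unfolding G_def by (simp add: power2_norm_eq_inner inner_diff_left inner_diff_right algebra_simps)
  qed
  have "\<mu> \<le> L" by (rule strong_convexity_le_smoothness[OF grad lipschitz strongly_convex])
  \<comment> \<open>Baillon--Haddad needs a positive constant, so pass to the limit \<open>\<beta> \<down> L - \<mu>\<close>; \<open>\<mu> = L\<close> is allowed\<close>
  have above: "(norm (G x - G y))\<^sup>2 \<le> \<beta> * ((G x - G y) \<bullet> (x - y))" if "\<beta> > L - \<mu>" for \<beta>
  proof (rule gradient_cocoercive[OF strongly_convex G_grad])
    show "(G y - G z) \<bullet> (y - z) \<le> \<beta> * (norm (y - z))\<^sup>2" for y z
      using G_bound[of y z] mult_right_mono[of "L - \<mu>" \<beta> "(norm (y - z))\<^sup>2"] that by simp
    show "\<beta> > 0" using that \<open>\<mu> \<le> L\<close> by simp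
  qed
  have "\<forall>\<^sub>F \<beta> in at_right (L - \<mu>). L - \<mu> < \<beta>"
    by (rule eventually_at_right_less)
  then have "\<forall>\<^sub>F \<beta> in at_right (L - \<mu>). (norm (G x - G y))\<^sup>2 \<le> \<beta> * ((G x - G y) \<bullet> (x - y))"
    by eventually_elim (rule above)
  then show ?thesis
    by (intro tendsto_lowerbound[where F = "at_right (L - \<mu>)"])
      (auto intro!: tendsto_intros simp: inner_commute)
qed

lemma gradient_step_contraction:
  fixes f :: "'a::euclidean_space \<Rightarrow> real"
  assumes grad: "\<And>y. (f has_derivative (\<lambda>d. gf y \<bullet> d)) (at y)"
    and lipschitz: "\<And>y z. norm (gf y - gf z) \<le> L * norm (y - z)"
    and strongly_convex: "convex_on UNIV (\<lambda>y. f y - \<mu> / 2 * (norm y)\<^sup>2)"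
    and "\<gamma> \<ge> 0"
  shows "(norm (x - \<gamma> *\<^sub>R gf x - (y - \<gamma> *\<^sub>R gf y)))\<^sup>2
           \<le> max ((1 - \<gamma> * \<mu>)\<^sup>2) ((\<gamma> * L - 1)\<^sup>2) * (norm (x - y))\<^sup>2"
proof -
  define G where "G y = gf y - \<mu> *\<^sub>R y" for y
  have "x - \<gamma> *\<^sub>R gf x - (y - \<gamma> *\<^sub>R gf y) = (1 - \<gamma> * \<mu>) *\<^sub>R (x - y) - \<gamma> *\<^sub>R (G x - G y)"
    unfolding G_def by (simp add: algebra_simps)
  moreover have "(1 - \<gamma> * \<mu> - \<gamma> * (L - \<mu>))\<^sup>2 = (\<gamma> * L - 1)\<^sup>2"
    by (simp add: power2_eq_square algebra_simps)
  moreover note strongly_convex_gradient_cocoercive[OF grad lipschitz strongly_convex, of x y, folded G_def]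
  ultimately show ?thesis
    using norm_diff_le_of_cocoercive[OF _ \<open>\<gamma> \<ge> 0\<close>, of "L - \<mu>" "G x - G y" "x - y" "1 - \<gamma> * \<mu>"]
      strong_convexity_le_smoothness[OF grad lipschitz strongly_convex]
    by simp
qed

section \<open>Conjugate functions and the proximity operator\<close>

lemma fconj_affine_minorant:
  fixes h :: "'u::real_inner \<Rightarrow> ereal"
  assumes "proper_fun h"
  obtains v a where "\<And>u. ereal (u \<bullet> v - a) \<le> fconj h u"
proof -
  obtain v where "h v < \<infinity>" "h v \<noteq> -\<infinity>" using assms unfolding proper_fun_def by auto
  then obtain a where a: "h v = ereal a" by (cases "h v") auto
  have "ereal (u \<bullet> v - a) \<le> fconj h u" for u
  proof -
    have "ereal (u \<bullet> v - a) = ereal (u \<bullet> v) - h v" using a by simp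
    also have "\<dots> \<le> fconj h u" unfolding fconj_def by (rule SUP_upper) simp
    finally show ?thesis .
  qed
  then show ?thesis using that by blast
qed

lemma fconj_not_MInfty:
  fixes h :: "'u::real_inner \<Rightarrow> ereal"
  assumes "proper_fun h"
  shows "fconj h u \<noteq> -\<infinity>"
proof -
  obtain v a where "\<And>u. ereal (u \<bullet> v - a) \<le> fconj h u"
    using fconj_affine_minorant[OF assms] by blast
  from this[of u] show ?thesis by auto
qed

lemma closed_epigraph_fconj:
  fixes h :: "'u::real_inner \<Rightarrow> ereal"
  assumes "proper_fun h"
  shows "closed {(x, t::real). fconj h x \<le> ereal t}"
proof -
  have "{(x, t::real). fconj h x \<le> ereal t} = (\<Inter>v. {(x, t::real). ereal (x \<bullet> v) - h v \<le> ereal t})"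
    unfolding fconj_def by (auto simp: SUP_le_iff)
  moreover have "closed {(x, t::real). ereal (x \<bullet> v) - h v \<le> ereal t}" for v
  proof (cases "h v")
    case (real a)
    then have "{(x, t::real). ereal (x \<bullet> v) - h v \<le> ereal t} = {p. fst p \<bullet> v - a \<le> snd p}"
      by auto
    moreover have "closed {p :: 'u \<times> real. fst p \<bullet> v - a \<le> snd p}"
      by (intro closed_Collect_le continuous_intros)
    ultimately show ?thesis by simp
  next
    case MInf
    then show ?thesis using assms unfolding proper_fun_def by auto
  qed simp
  ultimately show ?thesis by (simp add: closed_Inter)
qed

lemma le_of_sq_le_affine:
  fixes n A B :: real
  assumes "n\<^sup>2 \<le> A + B * n" "A \<ge> 0" "B \<ge> 0"
  shows "n \<le> 1 + A + B"
proof (cases "n \<le> 1")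
  case False
  then have "n * n \<le> (A + B) * n"
    using assms mult_left_mono[of 1 n A] by (simp add: power2_eq_square algebra_simps)
  then show ?thesis using False by simp
qed (use assms in simp)

text \<open>The affine minorant makes the prox objective coercive.\<close>

lemma bounded_prox_sublevel:
  fixes \<phi> :: "'u::euclidean_space \<Rightarrow> ereal"
  assumes minorant: "\<And>u. ereal (u \<bullet> v0 - a) \<le> \<phi> u" and "\<tau> > 0"
  shows "bounded {(q, t). \<phi> q \<le> ereal t \<and> \<tau> * t + (norm (q - z))\<^sup>2 / 2 \<le> B}"
proof -
  define C0 where "C0 = B + \<tau> * (norm z * norm v0 + a)"
  define A where "A = 2 * \<bar>C0\<bar>"
  define R where "R = 1 + A + 2 * \<tau> * norm v0"
  have "{(q, t). \<phi> q \<le> ereal t \<and> \<tau> * t + (norm (q - z))\<^sup>2 / 2 \<le> B}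
      \<subseteq> cball z R \<times> {- (R + norm z) * norm v0 - a .. B / \<tau>}"
  proof
    fix x assume "x \<in> {(q, t). \<phi> q \<le> ereal t \<and> \<tau> * t + (norm (q - z))\<^sup>2 / 2 \<le> B}"
    then obtain q t where x: "x = (q, t)" and \<phi>q: "\<phi> q \<le> ereal t"
      and \<psi>q: "\<tau> * t + (norm (q - z))\<^sup>2 / 2 \<le> B" by auto
    have "q \<bullet> v0 - a \<le> t" using minorant[of q] \<phi>q by (meson ereal_less_eq(3) order_trans)
    moreover have "- (norm (q - z) + norm z) * norm v0 \<le> q \<bullet> v0"
    proof -
      have "norm q \<le> norm (q - z) + norm z" using norm_triangle_sub[of q z] by simp
      then have "norm q * norm v0 \<le> (norm (q - z) + norm z) * norm v0" by (simp add: mult_right_mono)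
      with Cauchy_Schwarz_ineq2[of q v0] show ?thesis by (simp only: mult_minus_left abs_le_iff) linarith
    qed
    ultimately have t_lower: "- (norm (q - z) + norm z) * norm v0 - a \<le> t" by linarith
    have "(norm (q - z))\<^sup>2 \<le> 2 * C0 + 2 * \<tau> * norm v0 * norm (q - z)"
      using \<psi>q mult_left_mono[OF t_lower less_imp_le[OF \<open>\<tau> > 0\<close>]]
      unfolding C0_def by (simp add: algebra_simps)
    then have "(norm (q - z))\<^sup>2 \<le> A + 2 * \<tau> * norm v0 * norm (q - z)"
      unfolding A_def using abs_ge_self[of C0] by linarith
    then have "norm (q - z) \<le> R"
      unfolding R_def using \<open>\<tau> > 0\<close> by (intro le_of_sq_le_affine) (auto simp: A_def)
    moreover have "- (R + norm z) * norm v0 - a \<le> t"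
      using t_lower mult_right_mono[OF \<open>norm (q - z) \<le> R\<close> norm_ge_zero[of v0]]
      by (simp add: algebra_simps)
    moreover have "\<tau> * t \<le> B"
      using \<psi>q by (smt (verit) zero_le_divide_iff zero_le_power2)
    then have "t \<le> B / \<tau>"
      using \<open>\<tau> > 0\<close> by (simp add: pos_le_divide_eq mult.commute)
    ultimately show "x \<in> cball z R \<times> {- (R + norm z) * norm v0 - a .. B / \<tau>}"
      by (simp add: x dist_norm norm_minus_commute)
  qed
  then show ?thesis by (rule bounded_subset[OF bounded_Times[OF bounded_cball bounded_closed_interval]])
qed

lemma prox_objective_has_minimizer:
  fixes \<phi> :: "'u::euclidean_space \<Rightarrow> ereal"
  assumes minorant: "\<And>u. ereal (u \<bullet> v0 - a) \<le> \<phi> u"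
    and closed: "closed {(x, t::real). \<phi> x \<le> ereal t}"
    and finite: "\<phi> u1 = ereal c1" and "\<tau> > 0"
  shows "\<exists>p. \<forall>q. ereal \<tau> * \<phi> p + ereal ((norm (p - z))\<^sup>2 / 2)
                 \<le> ereal \<tau> * \<phi> q + ereal ((norm (q - z))\<^sup>2 / 2)"
proof -
  define B where "B = \<tau> * c1 + (norm (u1 - z))\<^sup>2 / 2"
  define \<psi> where "\<psi> p = \<tau> * snd p + (norm (fst p - z))\<^sup>2 / 2" for p :: "'u \<times> real"
  define S where "S = {(q, t). \<phi> q \<le> ereal t \<and> \<tau> * t + (norm (q - z))\<^sup>2 / 2 \<le> B}"
  have "S = {(x, t). \<phi> x \<le> ereal t} \<inter> {p. \<psi> p \<le> B}" unfolding S_def \<psi>_def by auto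
  then have "closed S" unfolding \<psi>_def by (auto intro!: closed_Int closed closed_Collect_le continuous_intros)
  moreover have "bounded S" unfolding S_def using minorant \<open>\<tau> > 0\<close> by (rule bounded_prox_sublevel)
  ultimately have "compact S" by (simp add: compact_eq_bounded_closed)
  moreover have "(u1, c1) \<in> S" unfolding S_def B_def using finite by simp
  moreover have "continuous_on S \<psi>" unfolding \<psi>_def by (intro continuous_intros) auto
  ultimately obtain p t0 where "(p, t0) \<in> S" and p_min: "\<And>y. y \<in> S \<Longrightarrow> \<psi> (p, t0) \<le> \<psi> y"
    using continuous_attains_inf by (metis empty_iff surj_pair)
  then have \<phi>p: "\<phi> p \<le> ereal t0" and "\<psi> (p, t0) \<le> B" by (auto simp: S_def \<psi>_def)
  have "ereal \<tau> * \<phi> p + ereal ((norm (p - z))\<^sup>2 / 2) \<le> ereal \<tau> * ereal t0 + ereal ((norm (p - z))\<^sup>2 / 2)"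
    using \<phi>p \<open>\<tau> > 0\<close> by (intro add_right_mono ereal_mult_left_mono) auto
  then have p_val: "ereal \<tau> * \<phi> p + ereal ((norm (p - z))\<^sup>2 / 2) \<le> ereal (\<psi> (p, t0))"
    by (simp add: \<psi>_def)
  have "ereal \<tau> * \<phi> p + ereal ((norm (p - z))\<^sup>2 / 2) \<le> ereal \<tau> * \<phi> q + ereal ((norm (q - z))\<^sup>2 / 2)"
    for q
  proof (cases "ereal B \<le> ereal \<tau> * \<phi> q + ereal ((norm (q - z))\<^sup>2 / 2)")
    case True
    then show ?thesis using p_val \<open>\<psi> (p, t0) \<le> B\<close> by (meson ereal_less_eq(3) order_trans)
  next
    case False
    moreover have "\<phi> q \<noteq> -\<infinity>" using minorant[of q] by auto
    ultimately obtain w where w: "\<phi> q = ereal w" using \<open>\<tau> > 0\<close> by (cases "\<phi> q") auto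
    with False have "(q, w) \<in> S" unfolding S_def by auto
    then have "\<psi> (p, t0) \<le> \<psi> (q, w)" by (rule p_min)
    then show ?thesis using p_val w unfolding \<psi>_def by (simp add: order_trans)
  qed
  then show ?thesis by blast
qed

lemma prox_minimizes:
  fixes \<phi> :: "'u::euclidean_space \<Rightarrow> ereal"
  assumes "\<And>u. ereal (u \<bullet> v0 - a) \<le> \<phi> u"
    and "closed {(x, t::real). \<phi> x \<le> ereal t}"
    and "\<phi> u1 = ereal c1" and "\<tau> > 0"
  shows "ereal \<tau> * \<phi> (prox \<tau> \<phi> z) + ereal ((norm (prox \<tau> \<phi> z - z))\<^sup>2 / 2)
           \<le> ereal \<tau> * \<phi> q + ereal ((norm (q - z))\<^sup>2 / 2)"
  using someI_ex[OF prox_objective_has_minimizer[OF assms]] unfolding prox_def by blast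

lemma strongly_convex_fun_segment:
  fixes \<phi> :: "'u::real_inner \<Rightarrow> ereal"
  assumes convex: "strongly_convex_fun \<mu> \<phi>"
    and "\<phi> p = ereal P" "\<phi> v = ereal V" "0 \<le> t" "t \<le> 1"
  shows "\<phi> (p + t *\<^sub>R (v - p))
           \<le> ereal ((1 - t) * P + t * V - \<mu> / 2 * (t * (1 - t) * (norm (v - p))\<^sup>2))"
proof -
  define q where "q = p + t *\<^sub>R (v - p)"
  define epi where "epi = {(x, s::real). \<phi> x - ereal (\<mu> / 2 * (norm x)\<^sup>2) \<le> ereal s}"
  have "convex epi" using convex unfolding epi_def strongly_convex_fun_def convex_fun_def .
  moreover have "(p, P - \<mu> / 2 * (norm p)\<^sup>2) \<in> epi" "(v, V - \<mu> / 2 * (norm v)\<^sup>2) \<in> epi"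
    using assms by (simp_all add: epi_def)
  ultimately have "(1 - t) *\<^sub>R (p, P - \<mu> / 2 * (norm p)\<^sup>2) + t *\<^sub>R (v, V - \<mu> / 2 * (norm v)\<^sup>2) \<in> epi"
    using assms by (intro convexD) auto
  moreover have "(1 - t) *\<^sub>R p + t *\<^sub>R v = q" by (simp add: q_def algebra_simps)
  ultimately have epi_q: "\<phi> q - ereal (\<mu> / 2 * (norm q)\<^sup>2)
      \<le> ereal ((1 - t) * (P - \<mu> / 2 * (norm p)\<^sup>2) + t * (V - \<mu> / 2 * (norm v)\<^sup>2))"
    by (simp add: epi_def)
  have norm_q: "(norm q)\<^sup>2 = (1 - t) * (norm p)\<^sup>2 + t * (norm v)\<^sup>2 - t * (1 - t) * (norm (v - p))\<^sup>2"
    unfolding q_def power2_norm_eq_inner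
    by (simp add: inner_add_left inner_add_right inner_diff_left inner_diff_right inner_commute
        algebra_simps power2_eq_square)
  show ?thesis
  proof (cases "\<phi> q")
    case (real r)
    with epi_q have "r \<le> (1 - t) * (P - \<mu> / 2 * (norm p)\<^sup>2) + t * (V - \<mu> / 2 * (norm v)\<^sup>2)
        + \<mu> / 2 * (norm q)\<^sup>2"
      by simp
    also have "\<dots> = (1 - t) * P + t * V - \<mu> / 2 * (t * (1 - t) * (norm (v - p))\<^sup>2)"
      unfolding norm_q by (simp add: field_simps)
    finally show ?thesis using real by (simp add: q_def)
  qed (use epi_q in \<open>auto simp: q_def\<close>)
qed

text \<open>If \<open>g\<close> is a subgradient of \<open>\<phi>\<close> at \<open>p\<close> to first order along the segment towards \<open>v\<close>,
  strong convexity upgrades this to the strong subgradient inequality at \<open>v\<close>.\<close>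

lemma strongly_convex_fun_first_order_ineq:
  fixes \<phi> :: "'u::real_inner \<Rightarrow> ereal"
  assumes convex: "strongly_convex_fun \<mu> \<phi>" and not_MInfty: "\<And>u. \<phi> u \<noteq> -\<infinity>"
    and finite: "\<phi> p = ereal P"
    and first_order: "\<And>t W. 0 < t \<Longrightarrow> t < 1 \<Longrightarrow> \<phi> (p + t *\<^sub>R (v - p)) = ereal W \<Longrightarrow>
           P + t * (g \<bullet> (v - p)) - t\<^sup>2 * C \<le> W"
  shows "\<phi> p + ereal (g \<bullet> (v - p) + \<mu> / 2 * (norm (v - p))\<^sup>2) \<le> \<phi> v"
proof (cases "\<phi> v")
  case (real V)
  define N where "N = (norm (v - p))\<^sup>2"
  have "P + g \<bullet> (v - p) + \<mu> / 2 * N - V \<le> t * (C + \<mu> / 2 * N)" if t: "0 < t" "t < 1" for t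
  proof -
    have upper: "\<phi> (p + t *\<^sub>R (v - p)) \<le> ereal ((1 - t) * P + t * V - \<mu> / 2 * (t * (1 - t) * N))"
      unfolding N_def using t by (intro strongly_convex_fun_segment[OF convex finite real]) auto
    then obtain W where W: "\<phi> (p + t *\<^sub>R (v - p)) = ereal W"
      using not_MInfty by (cases "\<phi> (p + t *\<^sub>R (v - p))") auto
    with upper first_order[OF t W]
    have "t * (P + g \<bullet> (v - p) + \<mu> / 2 * N - V) \<le> t * (t * (C + \<mu> / 2 * N))"
      by (simp add: algebra_simps power2_eq_square)
    then show ?thesis using t by simp
  qed
  then have "\<forall>\<^sub>F t in at_right 0. P + g \<bullet> (v - p) + \<mu> / 2 * N - V \<le> t * (C + \<mu> / 2 * N)"
    by (intro eventually_at_rightI[of 0 1]) auto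
  moreover have "((\<lambda>t. t * (C + \<mu> / 2 * N)) \<longlongrightarrow> 0) (at_right 0)"
    by (intro tendsto_mult_left_zero tendsto_ident_at)
  ultimately have "P + g \<bullet> (v - p) + \<mu> / 2 * N - V \<le> 0"
    by (intro tendsto_lowerbound[where F = "at_right 0"]) auto
  then show ?thesis using finite real unfolding N_def by simp
qed (use finite not_MInfty in auto)

lemma subdiff_strongly_convex_ineq:
  fixes \<phi> :: "'u::real_inner \<Rightarrow> ereal"
  assumes convex: "strongly_convex_fun \<mu> \<phi>" and not_MInfty: "\<And>u. \<phi> u \<noteq> -\<infinity>"
    and "\<phi> u = ereal U" and g: "g \<in> subdiff \<phi> u"
  shows "\<phi> u + ereal (g \<bullet> (v - u) + \<mu> / 2 * (norm (v - u))\<^sup>2) \<le> \<phi> v"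
proof (rule strongly_convex_fun_first_order_ineq[OF convex not_MInfty \<open>\<phi> u = ereal U\<close>, where C = 0])
  fix t W assume "\<phi> (u + t *\<^sub>R (v - u)) = ereal W"
  with g \<open>\<phi> u = ereal U\<close> show "U + t * (g \<bullet> (v - u)) - t\<^sup>2 * 0 \<le> W"
    unfolding subdiff_def by (force dest: spec[of _ "u + t *\<^sub>R (v - u)"])
qed

lemma prox_objective_minimizer_ineq:
  fixes \<phi> :: "'u::real_inner \<Rightarrow> ereal"
  assumes convex: "strongly_convex_fun \<mu> \<phi>" and not_MInfty: "\<And>u. \<phi> u \<noteq> -\<infinity>"
    and "\<phi> p = ereal P" and "\<tau> > 0"
    and minimal: "\<And>q. ereal \<tau> * \<phi> p + ereal ((norm (p - z))\<^sup>2 / 2)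
                      \<le> ereal \<tau> * \<phi> q + ereal ((norm (q - z))\<^sup>2 / 2)"
  shows "\<phi> p + ereal (((1 / \<tau>) *\<^sub>R (z - p)) \<bullet> (v - p) + \<mu> / 2 * (norm (v - p))\<^sup>2) \<le> \<phi> v"
proof (rule strongly_convex_fun_first_order_ineq[OF convex not_MInfty \<open>\<phi> p = ereal P\<close>])
  fix t W assume W: "\<phi> (p + t *\<^sub>R (v - p)) = ereal W"
  define c where "c = (p - z) \<bullet> (v - p)"
  define N where "N = (norm (v - p))\<^sup>2"
  have "(norm (p + t *\<^sub>R (v - p) - z))\<^sup>2 = (norm (p - z))\<^sup>2 + 2 * t * c + t\<^sup>2 * N"
    using power2_norm_add_scaleR[of "p - z" t "v - p"] unfolding c_def N_def by (simp add: algebra_simps)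
  then have "\<tau> * P \<le> \<tau> * W + t * c + t\<^sup>2 * N / 2"
    using minimal[of "p + t *\<^sub>R (v - p)"] W \<open>\<phi> p = ereal P\<close> by (simp add: field_simps)
  then have "(P - W) * \<tau> \<le> t * c + t\<^sup>2 * N / 2" by (simp add: algebra_simps)
  then have "P - W \<le> (t * c + t\<^sup>2 * N / 2) / \<tau>"
    using \<open>\<tau> > 0\<close> by (simp add: pos_le_divide_eq)
  moreover have "(t * c + t\<^sup>2 * N / 2) / \<tau> = t * c / \<tau> + t\<^sup>2 * (N / (2 * \<tau>))"
    using \<open>\<tau> > 0\<close> by (simp add: field_simps)
  moreover have "(z - p) \<bullet> (v - p) = - c"
    unfolding c_def by (simp add: inner_diff_left)
  then have "t * (((1 / \<tau>) *\<^sub>R (z - p)) \<bullet> (v - p)) = - (t * c / \<tau>)"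
    by simp
  ultimately show "P + t * (((1 / \<tau>) *\<^sub>R (z - p)) \<bullet> (v - p)) - t\<^sup>2 * ((norm (v - p))\<^sup>2 / (2 * \<tau>)) \<le> W"
    unfolding N_def[symmetric] by linarith
qed

lemma strongly_monotone_of_subgradient_ineqs:
  fixes \<phi> :: "'u::real_inner \<Rightarrow> ereal"
  assumes "\<phi> p1 = ereal P1" "\<phi> p2 = ereal P2"
    and "\<phi> p1 + ereal (g1 \<bullet> (p2 - p1) + \<mu> / 2 * (norm (p2 - p1))\<^sup>2) \<le> \<phi> p2"
    and "\<phi> p2 + ereal (g2 \<bullet> (p1 - p2) + \<mu> / 2 * (norm (p1 - p2))\<^sup>2) \<le> \<phi> p1"
  shows "\<mu> * (norm (p1 - p2))\<^sup>2 \<le> (g1 - g2) \<bullet> (p1 - p2)"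
  using assms norm_minus_commute[of p2 p1]
  by (simp add: inner_diff_left inner_diff_right algebra_simps)

section \<open>The operator \<open>K K\<^sup>*\<close>\<close>

lemma finite_eigenvalues_self_adjoint:
  fixes A :: "'a::euclidean_space \<Rightarrow> 'a"
  assumes self_adjoint: "\<And>v w. A v \<bullet> w = v \<bullet> A w"
  shows "finite {l. \<exists>v. v \<noteq> 0 \<and> A v = l *\<^sub>R v}"
proof -
  define S where "S = {l. \<exists>v. v \<noteq> 0 \<and> A v = l *\<^sub>R v}"
  define ev where "ev l = (SOME v. v \<noteq> 0 \<and> A v = l *\<^sub>R v)" for l
  have ev: "ev l \<noteq> 0 \<and> A (ev l) = l *\<^sub>R ev l" if "l \<in> S" for l
  proof -
    have "\<exists>v. v \<noteq> 0 \<and> A v = l *\<^sub>R v" using that by (simp add: S_def)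
    then show ?thesis unfolding ev_def by (rule someI_ex)
  qed
  have "inj_on ev S"
  proof (rule inj_onI)
    fix l1 l2 assume "l1 \<in> S" "l2 \<in> S" "ev l1 = ev l2"
    then have "l1 *\<^sub>R ev l1 = l2 *\<^sub>R ev l1" using ev by metis
    then show "l1 = l2" using ev \<open>l1 \<in> S\<close> by (simp add: scaleR_cancel_right)
  qed
  moreover have "pairwise orthogonal (ev ` S)"
  proof (rule pairwiseI)
    fix a b assume "a \<in> ev ` S" "b \<in> ev ` S" "a \<noteq> b"
    then obtain l1 l2 where l: "l1 \<in> S" "l2 \<in> S" "a = ev l1" "b = ev l2" "l1 \<noteq> l2" by blast
    have "l1 * (a \<bullet> b) = A a \<bullet> b" using ev[OF l(1)] l(3) by simp
    also have "\<dots> = a \<bullet> A b" by (rule self_adjoint)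
    also have "\<dots> = l2 * (a \<bullet> b)" using ev[OF l(2)] l(4) by simp
    finally show "orthogonal a b" using l(5) unfolding orthogonal_def by simp
  qed
  moreover have "0 \<notin> ev ` S" using ev by auto
  ultimately have "finite (ev ` S)"
    using pairwise_orthogonal_independent independent_bound_general by blast
  then show ?thesis using \<open>inj_on ev S\<close> unfolding S_def[symmetric] by (rule finite_imageD)
qed

lemma nonpos_if_quadratic_nonneg:
  fixes b c :: real
  assumes "\<And>t. 0 \<le> t * b + t\<^sup>2 * c"
  shows "b \<le> 0"
proof -
  have "\<forall>\<^sub>F t in at_left 0. b \<le> - t * c"
  proof (rule eventually_at_leftI[of "-1"])
    fix t :: real assume "t \<in> {-1<..<0}"
    then have "t * (b + t * c) \<ge> 0" "t < 0" using assms[of t] by (auto simp: power2_eq_square algebra_simps)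
    then show "b \<le> - t * c" by (auto simp: zero_le_mult_iff)
  qed simp
  moreover have "((\<lambda>t. - t * c) \<longlongrightarrow> 0) (at_left 0)"
    by (intro tendsto_mult_left_zero tendsto_minus_cancel_left[THEN iffD1]) (simp add: tendsto_ident_at)
  ultimately show ?thesis by (intro tendsto_lowerbound[where F = "at_left 0"]) auto
qed

lemma eigenvector_of_rayleigh_min:
  fixes A :: "'a::euclidean_space \<Rightarrow> 'a"
  assumes "linear A" and self_adjoint: "\<And>v w. A v \<bullet> w = v \<bullet> A w"
    and "norm v0 = 1" and m_le: "\<And>w. A v0 \<bullet> v0 * (norm w)\<^sup>2 \<le> A w \<bullet> w"
  shows "A v0 = (A v0 \<bullet> v0) *\<^sub>R v0"
proof -
  define m where "m = A v0 \<bullet> v0"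
  define e where "e = A v0 - m *\<^sub>R v0"
  have "0 \<le> t * (2 * (e \<bullet> e)) + t\<^sup>2 * (A e \<bullet> e - m * (norm e)\<^sup>2)" for t
  proof -
    have "A (v0 + t *\<^sub>R e) \<bullet> (v0 + t *\<^sub>R e) = m + 2 * t * (A v0 \<bullet> e) + t\<^sup>2 * (A e \<bullet> e)"
      using linear_add[OF \<open>linear A\<close>] linear_cmul[OF \<open>linear A\<close>] self_adjoint[of v0 e]
      by (simp add: m_def inner_add_left inner_add_right inner_commute power2_eq_square algebra_simps)
    moreover have "(norm (v0 + t *\<^sub>R e))\<^sup>2 = 1 + 2 * t * (v0 \<bullet> e) + t\<^sup>2 * (norm e)\<^sup>2"
      using \<open>norm v0 = 1\<close> by (simp add: power2_norm_add_scaleR)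
    moreover have "A v0 \<bullet> e = e \<bullet> e + m * (v0 \<bullet> e)"
      unfolding e_def by (simp add: inner_diff_left algebra_simps)
    ultimately show ?thesis using m_le[of "v0 + t *\<^sub>R e"] unfolding m_def[symmetric]
      by (simp add: algebra_simps)
  qed
  then have "2 * (e \<bullet> e) \<le> 0" by (rule nonpos_if_quadratic_nonneg)
  then have "e \<bullet> e = 0" using inner_ge_zero[of e] by linarith
  then show ?thesis unfolding e_def m_def by simp
qed

text \<open>\<open>lambda_min\<close> is defined through eigenvalues; the minimum of the Rayleigh quotient is one of
  them.\<close>

lemma lambda_min_rayleigh:
  fixes A :: "'a::euclidean_space \<Rightarrow> 'a"
  assumes "linear A" and self_adjoint: "\<And>v w. A v \<bullet> w = v \<bullet> A w"
  shows "lambda_min A \<in> {l. \<exists>v. v \<noteq> 0 \<and> A v = l *\<^sub>R v}"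
    and "lambda_min A * (norm v)\<^sup>2 \<le> A v \<bullet> v"
proof -
  define S where "S = {l. \<exists>v. v \<noteq> 0 \<and> A v = l *\<^sub>R v}"
  have "continuous_on (sphere 0 1) (\<lambda>v. A v \<bullet> v)"
    using \<open>linear A\<close> by (intro continuous_intros linear_continuous_on) (simp add: linear_linear)
  moreover obtain b :: 'a where "b \<in> Basis" using nonempty_Basis by blast
  then have "b \<in> sphere 0 1" by simp
  ultimately obtain v0 where v0: "norm v0 = 1" and v0_min: "\<And>w. norm w = 1 \<Longrightarrow> A v0 \<bullet> v0 \<le> A w \<bullet> w"
    using continuous_attains_inf[OF compact_sphere, of 0 1 "\<lambda>v. A v \<bullet> v"] by auto
  define m where "m = A v0 \<bullet> v0"
  have m_le: "m * (norm w)\<^sup>2 \<le> A w \<bullet> w" for w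
  proof (cases "w = 0")
    case False
    have "m \<le> A (w /\<^sub>R norm w) \<bullet> (w /\<^sub>R norm w)" unfolding m_def using False by (intro v0_min) simp
    also have "\<dots> = (A w \<bullet> w) / (norm w)\<^sup>2"
      using linear_cmul[OF \<open>linear A\<close>] False by (simp add: power2_eq_square field_simps)
    finally show ?thesis using False by (simp add: field_simps)
  qed (simp add: linear_0[OF \<open>linear A\<close>])
  have "A v0 = m *\<^sub>R v0"
    unfolding m_def using assms v0 m_le[unfolded m_def] by (rule eigenvector_of_rayleigh_min)
  then have "m \<in> S" using v0 unfolding S_def by (intro CollectI exI[of _ v0]) auto
  moreover have "finite S" unfolding S_def by (rule finite_eigenvalues_self_adjoint[OF self_adjoint])
  ultimately have "Min S \<in> S" "Min S \<le> m" by (auto intro: Min_in)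
  then show "lambda_min A \<in> {l. \<exists>v. v \<noteq> 0 \<and> A v = l *\<^sub>R v}"
    and "lambda_min A * (norm v)\<^sup>2 \<le> A v \<bullet> v"
    unfolding lambda_min_def S_def[symmetric]
    using m_le[of v] mult_right_mono[of "Min S" m "(norm v)\<^sup>2"] by auto
qed

lemma lambda_min_comp_adjoint:
  fixes K :: "'x::euclidean_space \<Rightarrow> 'u::euclidean_space"
  assumes "linear K"
  shows "0 \<le> lambda_min (K \<circ> adjoint K)"
    and "lambda_min (K \<circ> adjoint K) * (norm v)\<^sup>2 \<le> (norm (adjoint K v))\<^sup>2"
proof -
  have KK: "(K \<circ> adjoint K) v \<bullet> w = adjoint K v \<bullet> adjoint K w" for v w
    using adjoint_works[OF \<open>linear K\<close>] by simp
  have "linear (K \<circ> adjoint K)" by (intro linear_compose adjoint_linear assms)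
  moreover have self_adjoint: "(K \<circ> adjoint K) v \<bullet> w = v \<bullet> (K \<circ> adjoint K) w" for v w
    using KK[of v w] KK[of w v] by (simp add: inner_commute)
  ultimately have eig: "lambda_min (K \<circ> adjoint K) \<in> {l. \<exists>v. v \<noteq> 0 \<and> (K \<circ> adjoint K) v = l *\<^sub>R v}"
    and rayleigh: "lambda_min (K \<circ> adjoint K) * (norm w)\<^sup>2 \<le> (K \<circ> adjoint K) w \<bullet> w" for w
    by (rule lambda_min_rayleigh)+
  show "lambda_min (K \<circ> adjoint K) * (norm v)\<^sup>2 \<le> (norm (adjoint K v))\<^sup>2"
    using rayleigh[of v] KK[of v v] by (simp add: power2_norm_eq_inner)
  from eig obtain w where "w \<noteq> 0" "(K \<circ> adjoint K) w = lambda_min (K \<circ> adjoint K) *\<^sub>R w" by blast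
  then have "lambda_min (K \<circ> adjoint K) * (norm w)\<^sup>2 = (norm (adjoint K w))\<^sup>2"
    using KK[of w w] by (simp add: power2_norm_eq_inner)
  then have "0 \<le> lambda_min (K \<circ> adjoint K) * (norm w)\<^sup>2" by simp
  with \<open>w \<noteq> 0\<close> show "0 \<le> lambda_min (K \<circ> adjoint K)" by (simp add: zero_le_mult_iff)
qed

lemma norm_adjoint_le:
  fixes K :: "'x::euclidean_space \<Rightarrow> 'u::euclidean_space"
  assumes "linear K"
  shows "norm (adjoint K v) \<le> onorm K * norm v"
proof -
  have K: "bounded_linear K" using assms by (simp add: linear_conv_bounded_linear)
  have "norm (adjoint K v) * norm (adjoint K v) = K (adjoint K v) \<bullet> v"
    using power2_norm_eq_inner[of "adjoint K v", unfolded power2_eq_square]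
      adjoint_works[OF assms, of "adjoint K v" v] by simp
  also have "\<dots> \<le> norm (K (adjoint K v)) * norm v" by (rule norm_cauchy_schwarz)
  also have "\<dots> \<le> onorm K * norm (adjoint K v) * norm v"
    by (intro mult_right_mono onorm[OF K]) simp
  finally have "norm (adjoint K v) * norm (adjoint K v) \<le> norm (adjoint K v) * (onorm K * norm v)"
    by (simp add: mult_ac)
  then show ?thesis
    using onorm_pos_le[OF K] by (cases "adjoint K v = 0") auto
qed

section \<open>Square-integrable random vectors\<close>

definition square_integrable :: "'s measure \<Rightarrow> ('s \<Rightarrow> 'a::euclidean_space) \<Rightarrow> bool" where
  "square_integrable M V \<longleftrightarrow> V \<in> borel_measurable M \<and> integrable M (\<lambda>s. (norm (V s))\<^sup>2)"

lemma square_integrableD: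
  assumes "square_integrable M V"
  shows "V \<in> borel_measurable M" "integrable M (\<lambda>s. (norm (V s))\<^sup>2)"
  using assms unfolding square_integrable_def by auto

lemma square_integrable_bound:
  assumes W: "square_integrable M W" and V: "V \<in> borel_measurable M"
    and bound: "\<And>s. s \<in> space M \<Longrightarrow> norm (V s) \<le> norm (W s)"
  shows "square_integrable M V"
  unfolding square_integrable_def
proof (intro conjI V Bochner_Integration.integrable_bound[OF square_integrableD(2)[OF W]])
  show "(\<lambda>s. (norm (V s))\<^sup>2) \<in> borel_measurable M" using V by measurable
  show "AE s in M. norm ((norm (V s))\<^sup>2) \<le> norm ((norm (W s))\<^sup>2)"
    using bound by (intro AE_I2) (simp add: power_mono)
qed

lemma square_integrable_add:
  assumes V: "square_integrable M V" and W: "square_integrable M W"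
  shows "square_integrable M (\<lambda>s. V s + W s)"
  unfolding square_integrable_def
proof (intro conjI)
  note [measurable] = square_integrableD(1)[OF V] square_integrableD(1)[OF W]
  show "(\<lambda>s. V s + W s) \<in> borel_measurable M" by measurable
  show "integrable M (\<lambda>s. (norm (V s + W s))\<^sup>2)"
  proof (rule Bochner_Integration.integrable_bound)
    show "integrable M (\<lambda>s. 2 * (norm (V s))\<^sup>2 + 2 * (norm (W s))\<^sup>2)"
      using square_integrableD(2)[OF V] square_integrableD(2)[OF W] by simp
    show "(\<lambda>s. (norm (V s + W s))\<^sup>2) \<in> borel_measurable M" by measurable
    have "(norm (V s + W s))\<^sup>2 \<le> 2 * (norm (V s))\<^sup>2 + 2 * (norm (W s))\<^sup>2" for s
    proof -
      have "(norm (V s + W s))\<^sup>2 \<le> (norm (V s) + norm (W s))\<^sup>2"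
        by (intro power_mono norm_triangle_ineq) simp
      also have "\<dots> \<le> 2 * (norm (V s))\<^sup>2 + 2 * (norm (W s))\<^sup>2"
        using zero_le_power2[of "norm (V s) - norm (W s)"] by (simp add: power2_eq_square algebra_simps)
      finally show ?thesis .
    qed
    then show "AE s in M. norm ((norm (V s + W s))\<^sup>2) \<le> norm (2 * (norm (V s))\<^sup>2 + 2 * (norm (W s))\<^sup>2)"
      by (intro AE_I2) simp
  qed
qed

lemma square_integrable_bounded_linear:
  assumes V: "square_integrable M V" and T: "bounded_linear T"
  shows "square_integrable M (\<lambda>s. T (V s))"
  unfolding square_integrable_def
proof (intro conjI)
  note [measurable] = square_integrableD(1)[OF V]
    borel_measurable_continuous_onI[OF linear_continuous_on[OF T]]
  show "(\<lambda>s. T (V s)) \<in> borel_measurable M" by measurable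
  show "integrable M (\<lambda>s. (norm (T (V s)))\<^sup>2)"
  proof (rule Bochner_Integration.integrable_bound)
    show "integrable M (\<lambda>s. (onorm T)\<^sup>2 * (norm (V s))\<^sup>2)"
      using square_integrableD(2)[OF V] by simp
    show "(\<lambda>s. (norm (T (V s)))\<^sup>2) \<in> borel_measurable M" by measurable
    have "(norm (T (V s)))\<^sup>2 \<le> (onorm T)\<^sup>2 * (norm (V s))\<^sup>2" for s
      using power_mono[OF onorm[OF T, of "V s"]] by (simp add: power_mult_distrib)
    then show "AE s in M. norm ((norm (T (V s)))\<^sup>2) \<le> norm ((onorm T)\<^sup>2 * (norm (V s))\<^sup>2)"
      by (intro AE_I2) simp
  qed
qed

lemma square_integrable_scaleR:
  "square_integrable M V \<Longrightarrow> square_integrable M (\<lambda>s. a *\<^sub>R V s)"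
  using square_integrable_bounded_linear[OF _ bounded_linear_scaleR_right] .

lemma square_integrable_diff:
  "square_integrable M V \<Longrightarrow> square_integrable M W \<Longrightarrow> square_integrable M (\<lambda>s. V s - W s)"
  using square_integrable_add[of M V "\<lambda>s. (-1) *\<^sub>R W s"] square_integrable_scaleR[of M W "-1"] by simp

lemma square_integrable_cong:
  assumes "\<And>s. s \<in> space M \<Longrightarrow> V s = W s"
  shows "square_integrable M V \<longleftrightarrow> square_integrable M W"
proof -
  have "V \<in> borel_measurable M \<longleftrightarrow> W \<in> borel_measurable M"
    using assms by (intro measurable_cong) auto
  moreover have "integrable M (\<lambda>s. (norm (V s))\<^sup>2) \<longleftrightarrow> integrable M (\<lambda>s. (norm (W s))\<^sup>2)"
    using assms by (intro Bochner_Integration.integrable_cong) auto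
  ultimately show ?thesis unfolding square_integrable_def by simp
qed

lemma integrable_inner_square_integrable:
  assumes V: "square_integrable M V" and W: "square_integrable M W"
  shows "integrable M (\<lambda>s. V s \<bullet> W s)"
proof (rule Bochner_Integration.integrable_bound)
  note [measurable] = square_integrableD(1)[OF V] square_integrableD(1)[OF W]
  show "integrable M (\<lambda>s. (norm (V s))\<^sup>2 + (norm (W s))\<^sup>2)"
    using square_integrableD(2)[OF V] square_integrableD(2)[OF W] by auto
  show "(\<lambda>s. V s \<bullet> W s) \<in> borel_measurable M" by measurable
  have "\<bar>V s \<bullet> W s\<bar> \<le> (norm (V s))\<^sup>2 + (norm (W s))\<^sup>2" for s
  proof -
    have "2 * (norm (V s) * norm (W s)) \<le> (norm (V s))\<^sup>2 + (norm (W s))\<^sup>2"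
      using zero_le_power2[of "norm (V s) - norm (W s)"] by (simp add: power2_eq_square algebra_simps)
    moreover have "0 \<le> norm (V s) * norm (W s)" by simp
    moreover have "\<bar>V s \<bullet> W s\<bar> \<le> norm (V s) * norm (W s)" by (rule Cauchy_Schwarz_ineq2)
    ultimately show ?thesis by linarith
  qed
  then show "AE s in M. norm (V s \<bullet> W s) \<le> norm ((norm (V s))\<^sup>2 + (norm (W s))\<^sup>2)" by simp
qed

section \<open>Conditional expectations and filtrations\<close>

lemma integral_inner_noise_eq_0:
  fixes G R r :: "'s \<Rightarrow> 'a::euclidean_space"
  assumes "sigma_finite_subalgebra M F"
    and G: "square_integrable M G" and G_F: "G \<in> borel_measurable F"
    and R: "square_integrable M R" and r: "square_integrable M r"
    and unbiased: "\<And>b. b \<in> Basis \<Longrightarrow> AE s in M. real_cond_exp M F (\<lambda>s. R s \<bullet> b) s = r s \<bullet> b"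
  shows "(\<integral>s. G s \<bullet> (R s - r s) \<partial>M) = 0"
proof -
  interpret sigma_finite_subalgebra M F by fact
  note [measurable] = square_integrableD(1)[OF G] square_integrableD(1)[OF R]
    square_integrableD(1)[OF r] G_F
  have coordinate: "integrable M (\<lambda>s. (G s \<bullet> b) * ((R s - r s) \<bullet> b))
      \<and> (\<integral>s. (G s \<bullet> b) * ((R s - r s) \<bullet> b) \<partial>M) = 0" if b: "b \<in> Basis" for b
  proof -
    have Gb: "square_integrable M (\<lambda>s. (G s \<bullet> b) *\<^sub>R b)"
      by (rule square_integrable_bounded_linear[OF G])
        (intro bounded_linear_compose[OF bounded_linear_scaleR_left bounded_linear_inner_left])
    have integrable: "integrable M (\<lambda>s. (G s \<bullet> b) * (V s \<bullet> b))" if "square_integrable M V" for V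
      using integrable_inner_square_integrable[OF Gb that] by (simp add: inner_commute)
    have "(\<integral>s. (G s \<bullet> b) * (R s \<bullet> b) \<partial>M)
        = (\<integral>s. (G s \<bullet> b) * real_cond_exp M F (\<lambda>s. R s \<bullet> b) s \<partial>M)"
      by (rule real_cond_exp_intg(2)[symmetric, OF integrable[OF R]]) measurable
    also have "\<dots> = (\<integral>s. (G s \<bullet> b) * (r s \<bullet> b) \<partial>M)"
    proof (rule integral_cong_AE)
      show "AE s in M. (G s \<bullet> b) * real_cond_exp M F (\<lambda>s. R s \<bullet> b) s = (G s \<bullet> b) * (r s \<bullet> b)"
        using unbiased[OF b] by eventually_elim simp
    qed measurable
    finally have "(\<integral>s. (G s \<bullet> b) * (R s \<bullet> b) \<partial>M) = (\<integral>s. (G s \<bullet> b) * (r s \<bullet> b) \<partial>M)" .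
    moreover have "(G s \<bullet> b) * ((R s - r s) \<bullet> b) = (G s \<bullet> b) * (R s \<bullet> b) - (G s \<bullet> b) * (r s \<bullet> b)" for s
      by (simp add: inner_diff_left right_diff_distrib)
    ultimately show ?thesis using integrable[OF R] integrable[OF r] by simp
  qed
  have "(\<lambda>s. G s \<bullet> (R s - r s)) = (\<lambda>s. \<Sum>b\<in>Basis. (G s \<bullet> b) * ((R s - r s) \<bullet> b))"
    by (rule ext, rule euclidean_inner)
  then have "(\<integral>s. G s \<bullet> (R s - r s) \<partial>M) = (\<integral>s. (\<Sum>b\<in>Basis. (G s \<bullet> b) * ((R s - r s) \<bullet> b)) \<partial>M)"
    by simp
  also have "\<dots> = (\<Sum>b\<in>Basis. (\<integral>s. (G s \<bullet> b) * ((R s - r s) \<bullet> b) \<partial>M))"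
    using coordinate by (intro Bochner_Integration.integral_sum) blast
  also have "\<dots> = 0" using coordinate by simp
  finally show ?thesis .
qed

lemma integral_le_of_nn_cond_exp_le:
  fixes g k h :: "'s \<Rightarrow> real"
  assumes "sigma_finite_subalgebra M F"
    and [measurable]: "g \<in> borel_measurable M" "k \<in> borel_measurable M"
    and nonneg: "\<And>s. 0 \<le> g s" "\<And>s. 0 \<le> k s" "\<And>s. 0 \<le> h s" and "integrable M h"
    and bound: "AE s in M. nn_cond_exp M F (\<lambda>s. ennreal (g s)) s + ennreal (k s) \<le> ennreal (h s)"
  shows "integrable M g" "integrable M k" "(\<integral>s. g s \<partial>M) + (\<integral>s. k s \<partial>M) \<le> (\<integral>s. h s \<partial>M)"
proof -
  interpret sigma_finite_subalgebra M F by fact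
  have "(\<integral>\<^sup>+s. ennreal (g s) \<partial>M) + (\<integral>\<^sup>+s. ennreal (k s) \<partial>M)
      = (\<integral>\<^sup>+s. nn_cond_exp M F (\<lambda>s. ennreal (g s)) s \<partial>M) + (\<integral>\<^sup>+s. ennreal (k s) \<partial>M)"
    using nn_cond_exp_intg[of "\<lambda>_. 1" "\<lambda>s. ennreal (g s)"] by simp
  also have "\<dots> = (\<integral>\<^sup>+s. nn_cond_exp M F (\<lambda>s. ennreal (g s)) s + ennreal (k s) \<partial>M)"
    by (rule nn_integral_add[symmetric]) measurable
  also have "\<dots> \<le> (\<integral>\<^sup>+s. ennreal (h s) \<partial>M)"
    by (rule nn_integral_mono_AE[OF bound])
  also have "\<dots> = ennreal (\<integral>s. h s \<partial>M)"
    using nonneg \<open>integrable M h\<close> by (intro nn_integral_eq_integral) auto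
  finally have sum_le: "(\<integral>\<^sup>+s. ennreal (g s) \<partial>M) + (\<integral>\<^sup>+s. ennreal (k s) \<partial>M) \<le> ennreal (\<integral>s. h s \<partial>M)" .
  have "(\<integral>\<^sup>+s. ennreal (g s) \<partial>M) < \<infinity>" "(\<integral>\<^sup>+s. ennreal (k s) \<partial>M) < \<infinity>"
    using order_trans[OF add_increasing2[OF zero_le order_refl] sum_le]
      order_trans[OF add_increasing[OF zero_le order_refl] sum_le]
    by (auto intro: le_less_trans)
  then show g: "integrable M g" and k: "integrable M k"
    using nonneg by (auto intro!: integrableI_nonneg)
  have "0 \<le> (\<integral>s. g s \<partial>M)" "0 \<le> (\<integral>s. k s \<partial>M)" "0 \<le> (\<integral>s. h s \<partial>M)"
    using nonneg by (simp_all add: Bochner_Integration.integral_nonneg)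
  moreover have "ennreal (\<integral>s. g s \<partial>M) + ennreal (\<integral>s. k s \<partial>M) \<le> ennreal (\<integral>s. h s \<partial>M)"
    using sum_le nonneg g k by (simp add: nn_integral_eq_integral)
  ultimately show "(\<integral>s. g s \<partial>M) + (\<integral>s. k s \<partial>M) \<le> (\<integral>s. h s \<partial>M)"
    by (simp add: ennreal_plus[symmetric] del: ennreal_plus)
qed

lemma AE_tendsto_zero_of_nn_integral_le_summable:
  fixes X :: "nat \<Rightarrow> 's \<Rightarrow> real"
  assumes [measurable]: "\<And>t. X t \<in> borel_measurable M" and nonneg: "\<And>t s. 0 \<le> X t s"
    and bound: "\<And>t. (\<integral>\<^sup>+s. ennreal (X t s) \<partial>M) \<le> ennreal (a t)"
    and a_nonneg: "\<And>t. 0 \<le> a t" and "summable a"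
  shows "AE s in M. (\<lambda>t. X t s) \<longlonglongrightarrow> 0"
proof -
  have "(\<integral>\<^sup>+s. (\<Sum>t. ennreal (X t s)) \<partial>M) = (\<Sum>t. \<integral>\<^sup>+s. ennreal (X t s) \<partial>M)"
    by (rule nn_integral_suminf) measurable
  also have "\<dots> \<le> (\<Sum>t. ennreal (a t))" by (intro suminf_le bound) auto
  also have "\<dots> = ennreal (\<Sum>t. a t)" using a_nonneg \<open>summable a\<close> by (rule suminf_ennreal2)
  finally have "(\<integral>\<^sup>+s. (\<Sum>t. ennreal (X t s)) \<partial>M) \<noteq> \<infinity>" by (auto simp: top_unique)
  then have "AE s in M. (\<Sum>t. ennreal (X t s)) \<noteq> \<infinity>" by (intro nn_integral_PInf_AE) measurable
  then show ?thesis
  proof eventually_elim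
    case (elim s)
    then have "summable (\<lambda>t. X t s)"
      by (intro summable_suminf_not_top nonneg) (simp add: infinity_ennreal_def)
    then show ?case by (rule summable_LIMSEQ_zero)
  qed
qed

lemma space_natural_filtration [simp]: "space (natural_filtration M X t) = space M"
  unfolding natural_filtration_def by (rule space_measure_of_conv)

lemma sets_natural_filtration:
  "sets (natural_filtration M X t)
     = sigma_sets (space M) {X i -` A \<inter> space M | i A. i \<le> t \<and> A \<in> sets borel}"
  unfolding natural_filtration_def by (rule sets_measure_of) auto

lemma natural_filtration_subalgebra:
  assumes "\<And>i. X i \<in> borel_measurable M"
  shows "subalgebra M (natural_filtration M X t)"
  unfolding subalgebra_def sets_natural_filtration
  using measurable_sets[OF assms] by (auto intro!: sets.sigma_sets_subset)

lemma measurable_natural_filtration: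
  assumes "i \<le> t"
  shows "X i \<in> borel_measurable (natural_filtration M X t)"
proof (rule measurableI)
  fix A :: "'b set" assume "A \<in> sets borel"
  with assms show "X i -` A \<inter> space (natural_filtration M X t) \<in> sets (natural_filtration M X t)"
    unfolding sets_natural_filtration by (auto intro: sigma_sets.Basic)
qed simp

lemma sigma_finite_subalgebra_natural_filtration:
  assumes "prob_space M" "\<And>i. X i \<in> borel_measurable M"
  shows "sigma_finite_subalgebra M (natural_filtration M X t)"
proof -
  interpret prob_space M by fact
  have "finite_measure_subalgebra M (natural_filtration M X t)"
    by unfold_locales (rule natural_filtration_subalgebra[OF assms(2)])
  then show ?thesis by (rule finite_measure_subalgebra_is_sigma_finite)
qed

section \<open>One step of RandProx\<close>

locale randprox_parameters =
  fixes K :: "'x::euclidean_space \<Rightarrow> 'u::euclidean_space"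
    and f :: "'x \<Rightarrow> real" and gf :: "'x \<Rightarrow> 'x"
    and h :: "'u \<Rightarrow> ereal"
    and Lf \<mu>f \<mu>h \<gamma> \<tau> om omran \<zeta> :: real
    and xs :: 'x and us :: 'u
  assumes K_lin: "linear K"
    and f_grad: "\<And>y. (f has_derivative (\<lambda>d. gf y \<bullet> d)) (at y)"
    and f_smooth: "\<And>y z. norm (gf y - gf z) \<le> Lf * norm (y - z)"
    and f_strong: "convex_on UNIV (\<lambda>y. f y - \<mu>f / 2 * (norm y)\<^sup>2)"
    and h_proper: "proper_fun h"
    and hs_strong: "\<mu>h \<ge> 0" "strongly_convex_fun \<mu>h (fconj h)"
    and saddle: "gf xs + adjoint K us = 0" "K xs \<in> subdiff (fconj h) us"
    and \<mu>f_pos: "\<mu>f > 0"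
    and lam_or_\<mu>h: "lambda_min (K \<circ> adjoint K) > 0 \<or> \<mu>h > 0"
    and \<gamma>: "0 < \<gamma>" "\<gamma> < 2 / Lf" and \<tau>: "\<tau> > 0"
    and stepsize: "\<gamma> * \<tau> * ((1 - \<zeta>) * (onorm K)\<^sup>2 + omran) \<le> 1"
    and om: "om \<ge> 0" and omran: "omran \<ge> 0" and \<zeta>: "0 \<le> \<zeta>" "\<zeta> \<le> 1"
begin

abbreviation "hs \<equiv> fconj h"
abbreviation "lam \<equiv> lambda_min (K \<circ> adjoint K)"
abbreviation "rate \<equiv> max (max ((1 - \<gamma> * \<mu>f)\<^sup>2) ((\<gamma> * Lf - 1)\<^sup>2))
                         (1 - (2 * \<tau> * \<mu>h + \<gamma> * \<tau> * lam) / ((1 + om) * (1 + 2 * \<tau> * \<mu>h)))"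

text \<open>For the state \<open>(a, b) = (x\<^sup>t, u\<^sup>t)\<close>, \<open>xhat_of a b\<close> is \<open>x\<^sup>t\<close> with a hat, \<open>residual a b\<close> is
  \<open>r\<^sup>t\<close> and \<open>lyapunov a b\<close> is \<open>\<Psi>\<^sup>t\<close>; \<open>rate\<close> is the constant \<open>c\<close> of the theorem.\<close>

definition xhat_of :: "'x \<Rightarrow> 'u \<Rightarrow> 'x" where
  "xhat_of a b = a - \<gamma> *\<^sub>R gf a - \<gamma> *\<^sub>R adjoint K b"

definition residual :: "'x \<Rightarrow> 'u \<Rightarrow> 'u" where
  "residual a b = prox \<tau> hs (b + \<tau> *\<^sub>R K (xhat_of a b)) - b"

definition lyapunov :: "'x \<Rightarrow> 'u \<Rightarrow> real" where
  "lyapunov a b = (1 / \<gamma>) * (norm (a - xs))\<^sup>2 + (1 + om) * (1 / \<tau> + 2 * \<mu>h) * (norm (b - us))\<^sup>2"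

lemma lyapunov_nonneg: "0 \<le> lyapunov a b"
  unfolding lyapunov_def using \<gamma> \<tau> om hs_strong(1) by (intro add_nonneg_nonneg mult_nonneg_nonneg) auto

lemma Lf_pos: "Lf > 0"
  using strong_convexity_le_smoothness[OF f_grad f_smooth f_strong] \<mu>f_pos by simp

lemma rate_lt_1: "rate < 1"
proof -
  have "\<gamma> * Lf < 2" using \<gamma> Lf_pos by (simp add: field_simps)
  moreover have "0 < \<gamma> * \<mu>f" "\<gamma> * \<mu>f \<le> \<gamma> * Lf"
    using \<gamma> \<mu>f_pos strong_convexity_le_smoothness[OF f_grad f_smooth f_strong] by auto
  ultimately have "\<bar>1 - \<gamma> * \<mu>f\<bar> < 1" "\<bar>\<gamma> * Lf - 1\<bar> < 1" by auto
  then have "(1 - \<gamma> * \<mu>f)\<^sup>2 < 1" "(\<gamma> * Lf - 1)\<^sup>2 < 1" by (simp_all add: abs_square_less_1)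
  moreover have "2 * \<tau> * \<mu>h + \<gamma> * \<tau> * lam > 0"
    using lam_or_\<mu>h lambda_min_comp_adjoint(1)[OF K_lin] \<tau> \<gamma> hs_strong(1)
    by (auto simp: add_pos_nonneg add_nonneg_pos)
  moreover have "(1 + om) * (1 + 2 * \<tau> * \<mu>h) > 0" using om \<tau> hs_strong(1) by (simp add: add_pos_nonneg)
  ultimately show ?thesis by simp
qed

lemma rate_nonneg: "0 \<le> rate"
  by (simp add: le_max_iff_disj)

lemma hs_not_MInfty: "hs u \<noteq> -\<infinity>"
  by (rule fconj_not_MInfty[OF h_proper])

lemma hs_saddle_finite: "hs us = ereal (real_of_ereal (hs us))"
  using saddle(2) hs_not_MInfty[of us] unfolding subdiff_def by (cases "hs us") auto

lemma saddle_subgradient_ineq: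
  "hs us + ereal (K xs \<bullet> (v - us) + \<mu>h / 2 * (norm (v - us))\<^sup>2) \<le> hs v"
  by (rule subdiff_strongly_convex_ineq[OF hs_strong(2) hs_not_MInfty hs_saddle_finite saddle(2)])

lemma prox_minimizes_objective:
  "ereal \<tau> * hs (prox \<tau> hs z) + ereal ((norm (prox \<tau> hs z - z))\<^sup>2 / 2)
     \<le> ereal \<tau> * hs q + ereal ((norm (q - z))\<^sup>2 / 2)"
proof -
  obtain v a where "\<And>u. ereal (u \<bullet> v - a) \<le> hs u" using fconj_affine_minorant[OF h_proper] by blast
  then show ?thesis
    by (rule prox_minimizes[OF _ closed_epigraph_fconj[OF h_proper] hs_saddle_finite \<tau>])
qed

lemma prox_finite: "hs (prox \<tau> hs z) = ereal (real_of_ereal (hs (prox \<tau> hs z)))"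
  using prox_minimizes_objective[of z us] hs_saddle_finite hs_not_MInfty[of "prox \<tau> hs z"] \<tau>
  by (cases "hs (prox \<tau> hs z)") auto

lemma prox_subgradient_ineq:
  "hs (prox \<tau> hs z) + ereal (((1 / \<tau>) *\<^sub>R (z - prox \<tau> hs z)) \<bullet> (v - prox \<tau> hs z)
      + \<mu>h / 2 * (norm (v - prox \<tau> hs z))\<^sup>2) \<le> hs v"
  by (rule prox_objective_minimizer_ineq[OF hs_strong(2) hs_not_MInfty prox_finite \<tau>
        prox_minimizes_objective])

lemma prox_saddle_monotone:
  "\<mu>h * (norm (prox \<tau> hs z - us))\<^sup>2
     \<le> ((1 / \<tau>) *\<^sub>R (z - prox \<tau> hs z) - K xs) \<bullet> (prox \<tau> hs z - us)"
  using strongly_monotone_of_subgradient_ineqs[OF prox_finite hs_saddle_finite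
      prox_subgradient_ineq saddle_subgradient_ineq]
  by simp

lemma prox_nonexpansive: "norm (prox \<tau> hs z1 - prox \<tau> hs z2) \<le> norm (z1 - z2)"
proof (rule norm_le_if_sq_le_inner)
  define d where "d = prox \<tau> hs z1 - prox \<tau> hs z2"
  have "\<mu>h * (norm d)\<^sup>2 \<le> (1 / \<tau>) * ((z1 - z2) \<bullet> d - (norm d)\<^sup>2)"
    using strongly_monotone_of_subgradient_ineqs[OF prox_finite[of z1] prox_finite[of z2]
        prox_subgradient_ineq[of z1] prox_subgradient_ineq[of z2]]
    unfolding d_def power2_norm_eq_inner by (simp add: algebra_simps inner_diff_left inner_diff_right)
  moreover have "0 \<le> \<mu>h * (norm d)\<^sup>2" using hs_strong(1) by simp
  ultimately have "0 \<le> (1 / \<tau>) * ((z1 - z2) \<bullet> d - (norm d)\<^sup>2)" by linarith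
  then show "(norm d)\<^sup>2 \<le> (z1 - z2) \<bullet> d" using \<tau> by (simp add: zero_le_divide_iff)
qed

lemma prox_dist_saddle: "norm (prox \<tau> hs z - us) \<le> norm (z - us - \<tau> *\<^sub>R K xs)"
proof (rule norm_le_if_sq_le_inner)
  define d where "d = prox \<tau> hs z - us"
  have "\<mu>h * (norm d)\<^sup>2 \<le> (1 / \<tau>) * ((z - us - \<tau> *\<^sub>R K xs) \<bullet> d - (norm d)\<^sup>2)"
    using prox_saddle_monotone[of z] \<tau> unfolding d_def power2_norm_eq_inner
    by (simp add: algebra_simps inner_diff_left inner_diff_right)
  moreover have "0 \<le> \<mu>h * (norm d)\<^sup>2" using hs_strong(1) by simp
  ultimately have "0 \<le> (1 / \<tau>) * ((z - us - \<tau> *\<^sub>R K xs) \<bullet> d - (norm d)\<^sup>2)" by linarith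
  then show "(norm d)\<^sup>2 \<le> (z - us - \<tau> *\<^sub>R K xs) \<bullet> d" using \<tau> by (simp add: zero_le_divide_iff)
qed

lemma measurable_prox [measurable]: "prox \<tau> hs \<in> borel_measurable borel"
proof (rule borel_measurable_continuous_onI, rule lipschitz_on_continuous_on)
  show "1-lipschitz_on UNIV (prox \<tau> hs)"
    by (rule lipschitz_onI) (auto simp: dist_norm prox_nonexpansive)
qed

lemma continuous_on_gf: "continuous_on UNIV gf"
proof (rule lipschitz_on_continuous_on)
  show "Lf-lipschitz_on UNIV gf" by (rule lipschitz_onI) (use Lf_pos f_smooth in \<open>auto simp: dist_norm\<close>)
qed

lemma measurable_gf [measurable]: "gf \<in> borel_measurable borel"
  by (rule borel_measurable_continuous_onI[OF continuous_on_gf])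

lemma bounded_linear_K: "bounded_linear K" and bounded_linear_adjoint: "bounded_linear (adjoint K)"
  using K_lin adjoint_linear[OF K_lin] by (simp_all add: linear_conv_bounded_linear)

lemma measurable_K [measurable]: "K \<in> borel_measurable borel"
  and measurable_adjoint [measurable]: "adjoint K \<in> borel_measurable borel"
  by (intro borel_measurable_continuous_onI linear_continuous_on bounded_linear_K
      bounded_linear_adjoint)+

lemma xhat_of_saddle: "xhat_of xs us = xs"
proof -
  have "\<gamma> *\<^sub>R gf xs + \<gamma> *\<^sub>R adjoint K us = 0"
    using saddle(1) by (simp add: scaleR_right_distrib[symmetric])
  then show ?thesis unfolding xhat_of_def by (simp add: diff_diff_eq)
qed

lemma lyapunov_add_noise:
  "lyapunov (a - \<gamma> *\<^sub>R adjoint K D) (b + (1 / (1 + om)) *\<^sub>R D)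
     = lyapunov a b + ((2 * (1 / \<tau> + 2 * \<mu>h)) *\<^sub>R (b - us) - 2 *\<^sub>R K (a - xs)) \<bullet> D
       + \<gamma> * (norm (adjoint K D))\<^sup>2 + (1 / \<tau> + 2 * \<mu>h) / (1 + om) * (norm D)\<^sup>2"
proof -
  define C where "C = 1 / \<tau> + 2 * \<mu>h"
  define k where "k = 1 / (1 + om)"
  define \<alpha> where "\<alpha> = K (a - xs) \<bullet> D"
  define \<beta> where "\<beta> = (b - us) \<bullet> D"
  have k: "(1 + om) * k = 1" "C / (1 + om) = C * k" using om unfolding k_def by simp_all
  have primal: "(norm (a - \<gamma> *\<^sub>R adjoint K D - xs))\<^sup>2
      = (norm (a - xs))\<^sup>2 - 2 * \<gamma> * \<alpha> + \<gamma>\<^sup>2 * (norm (adjoint K D))\<^sup>2"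
    using power2_norm_add_scaleR[of "a - xs" "- \<gamma>" "adjoint K D"] unfolding \<alpha>_def
    by (simp add: adjoint_works[OF K_lin] algebra_simps)
  have dual: "(norm (b + k *\<^sub>R D - us))\<^sup>2 = (norm (b - us))\<^sup>2 + 2 * k * \<beta> + k\<^sup>2 * (norm D)\<^sup>2"
    using power2_norm_add_scaleR[of "b - us" k D] unfolding \<beta>_def by (simp add: algebra_simps)
  have cross: "((2 * C) *\<^sub>R (b - us) - 2 *\<^sub>R K (a - xs)) \<bullet> D = 2 * C * \<beta> - 2 * \<alpha>"
    unfolding \<alpha>_def \<beta>_def by (simp add: inner_diff_left)
  have "lyapunov (a - \<gamma> *\<^sub>R adjoint K D) (b + k *\<^sub>R D)
      = lyapunov a b - 2 * \<alpha> + \<gamma> * (norm (adjoint K D))\<^sup>2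
        + 2 * C * ((1 + om) * k) * \<beta> + C * ((1 + om) * k) * k * (norm D)\<^sup>2"
    unfolding lyapunov_def primal dual C_def[symmetric] using \<gamma>
    by (simp add: power2_eq_square field_simps)
  then show ?thesis
    unfolding C_def[symmetric] k_def[symmetric] k cross by simp
qed

lemma xhat_of_sub_saddle:
  "xhat_of a b - xs = ((a - \<gamma> *\<^sub>R gf a) - (xs - \<gamma> *\<^sub>R gf xs)) - \<gamma> *\<^sub>R adjoint K (b - us)"
proof -
  have "gf xs = - adjoint K us" using saddle(1) by (simp add: eq_neg_iff_add_eq_0)
  then show ?thesis
    unfolding xhat_of_def by (simp add: linear_diff[OF adjoint_linear[OF K_lin]] algebra_simps)
qed

lemma prox_step_monotone:
  fixes a :: 'x and b :: 'u
  defines "p \<equiv> prox \<tau> hs (b + \<tau> *\<^sub>R K (xhat_of a b))"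
    and "w \<equiv> (a - \<gamma> *\<^sub>R gf a) - (xs - \<gamma> *\<^sub>R gf xs)"
  shows "\<mu>h * (norm (p - us))\<^sup>2
      \<le> (1 / \<tau>) * ((b - us) \<bullet> (p - us) - (norm (p - us))\<^sup>2) + w \<bullet> adjoint K (p - us)
        - \<gamma> * (adjoint K (b - us) \<bullet> adjoint K (p - us))"
proof -
  define xh where "xh = xhat_of a b"
  have "\<mu>h * (norm (p - us))\<^sup>2 \<le> ((1 / \<tau>) *\<^sub>R (b + \<tau> *\<^sub>R K xh - p) - K xs) \<bullet> (p - us)"
    using prox_saddle_monotone[of "b + \<tau> *\<^sub>R K xh"] unfolding p_def xh_def .
  also have "(1 / \<tau>) *\<^sub>R (b + \<tau> *\<^sub>R K xh - p) - K xs = (1 / \<tau>) *\<^sub>R ((b - us) - (p - us)) + K (xh - xs)"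
    using \<tau> linear_diff[OF K_lin, of xh xs] by (simp add: algebra_simps)
  also have "((1 / \<tau>) *\<^sub>R ((b - us) - (p - us)) + K (xh - xs)) \<bullet> (p - us)
      = (1 / \<tau>) * ((b - us) \<bullet> (p - us) - (norm (p - us))\<^sup>2) + (xh - xs) \<bullet> adjoint K (p - us)"
    by (simp only: inner_add_left inner_diff_left inner_scaleR_left adjoint_works[OF K_lin]
        power2_norm_eq_inner)
  also have "(xh - xs) \<bullet> adjoint K (p - us)
      = w \<bullet> adjoint K (p - us) - \<gamma> * (adjoint K (b - us) \<bullet> adjoint K (p - us))"
    unfolding xh_def xhat_of_sub_saddle w_def[symmetric] by (simp add: inner_diff_left)
  finally show ?thesis by simp
qed

lemma residual_terms_nonpos:
  "\<gamma> * (1 - \<zeta>) * (norm (adjoint K v))\<^sup>2 + (\<gamma> * omran - 1 / \<tau>) * (norm v)\<^sup>2 \<le> 0"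
proof -
  have "(norm (adjoint K v))\<^sup>2 \<le> (onorm K)\<^sup>2 * (norm v)\<^sup>2"
    using power_mono[OF norm_adjoint_le[OF K_lin, of v]] by (simp add: power_mult_distrib)
  then have "\<gamma> * (1 - \<zeta>) * (norm (adjoint K v))\<^sup>2 \<le> \<gamma> * (1 - \<zeta>) * ((onorm K)\<^sup>2 * (norm v)\<^sup>2)"
    using \<gamma> \<zeta> by (intro mult_left_mono) auto
  moreover have "(\<gamma> * (1 - \<zeta>) * (onorm K)\<^sup>2 + \<gamma> * omran - 1 / \<tau>) * (norm v)\<^sup>2 \<le> 0"
    using stepsize \<tau> by (intro mult_nonpos_nonneg) (simp_all add: field_simps)
  ultimately show ?thesis by (simp add: algebra_simps)
qed

lemma gradient_step_rate:
  "(norm ((a - \<gamma> *\<^sub>R gf a) - (xs - \<gamma> *\<^sub>R gf xs)))\<^sup>2 \<le> rate * (norm (a - xs))\<^sup>2"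
proof -
  have "(norm ((a - \<gamma> *\<^sub>R gf a) - (xs - \<gamma> *\<^sub>R gf xs)))\<^sup>2
      \<le> max ((1 - \<gamma> * \<mu>f)\<^sup>2) ((\<gamma> * Lf - 1)\<^sup>2) * (norm (a - xs))\<^sup>2"
    using \<gamma> by (intro gradient_step_contraction[OF f_grad f_smooth f_strong]) simp
  also have "\<dots> \<le> rate * (norm (a - xs))\<^sup>2" by (intro mult_right_mono) auto
  finally show ?thesis .
qed

lemma dual_contraction:
  "((1 / \<tau> + 2 * \<mu>h) * om + 1 / \<tau>) * (norm e)\<^sup>2 - \<gamma> * (norm (adjoint K e))\<^sup>2
     \<le> rate * ((1 + om) * (1 / \<tau> + 2 * \<mu>h) * (norm e)\<^sup>2)"
proof -
  define C where "C = 1 / \<tau> + 2 * \<mu>h"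
  define N where "N = 2 * \<tau> * \<mu>h + \<gamma> * \<tau> * lam"
  define Dn where "Dn = (1 + om) * (1 + 2 * \<tau> * \<mu>h)"
  have "Dn > 0" unfolding Dn_def using \<tau> om hs_strong(1) by (simp add: add_pos_nonneg)
  have "C * om + 1 / \<tau> - \<gamma> * lam = (Dn - N) / \<tau>"
    unfolding C_def N_def Dn_def using \<tau> by (simp add: field_simps)
  also have "\<dots> = (1 - N / Dn) * (Dn / \<tau>)"
    using \<open>Dn > 0\<close> \<tau> by (simp add: field_simps)
  also have "\<dots> = (1 - N / Dn) * ((1 + om) * C)"
    unfolding C_def Dn_def using \<tau> by (simp add: field_simps)
  also have "\<dots> \<le> rate * ((1 + om) * C)"
    using \<tau> om hs_strong(1) unfolding C_def N_def Dn_def by (intro mult_right_mono) auto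
  finally have "(C * om + 1 / \<tau> - \<gamma> * lam) * (norm e)\<^sup>2 \<le> rate * ((1 + om) * C) * (norm e)\<^sup>2"
    by (rule mult_right_mono) simp
  moreover have "\<gamma> * lam * (norm e)\<^sup>2 \<le> \<gamma> * (norm (adjoint K e))\<^sup>2"
    using lambda_min_comp_adjoint(2)[OF K_lin, of e] \<gamma> by (simp add: mult.assoc)
  ultimately show ?thesis unfolding C_def by (simp add: algebra_simps)
qed

text \<open>The strong monotonicity of the prox step relative to the saddle point cancels the cross
  terms; the step-size condition absorbs what remains of the residual \<open>p - b\<close>, the gradient step
  contracts the primal part, and \<open>lam\<close> bounds \<open>\<parallel>adjoint K (b - us)\<parallel>\<^sup>2\<close> from below.\<close>

lemma deterministic_step_ineq:
  fixes a :: 'x and b :: 'u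
  defines "p \<equiv> prox \<tau> hs (b + \<tau> *\<^sub>R K (xhat_of a b))"
  shows "(1 / \<gamma>) * (norm (xhat_of a b - \<gamma> *\<^sub>R adjoint K (p - b) - xs))\<^sup>2
           + \<gamma> * (omran * (norm (p - b))\<^sup>2 - \<zeta> * (norm (adjoint K (p - b)))\<^sup>2)
           + (1 / \<tau> + 2 * \<mu>h) * (om * (norm (b - us))\<^sup>2 + (norm (p - us))\<^sup>2)
         \<le> rate * lyapunov a b"
proof -
  define i\<gamma> where "i\<gamma> = 1 / \<gamma>"
  define i\<tau> where "i\<tau> = 1 / \<tau>"
  define C where "C = i\<tau> + 2 * \<mu>h"
  define w where "w = (a - \<gamma> *\<^sub>R gf a) - (xs - \<gamma> *\<^sub>R gf xs)"
  define e where "e = b - us"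
  define \<delta> where "\<delta> = p - us"
  have pb: "p - b = \<delta> - e" unfolding e_def \<delta>_def by simp
  have "xhat_of a b - \<gamma> *\<^sub>R adjoint K (p - b) - xs = (xhat_of a b - xs) - \<gamma> *\<^sub>R adjoint K (\<delta> - e)"
    unfolding pb by simp
  then have primal: "xhat_of a b - \<gamma> *\<^sub>R adjoint K (p - b) - xs = w - \<gamma> *\<^sub>R adjoint K \<delta>"
    unfolding xhat_of_sub_saddle w_def[symmetric] e_def[symmetric]
    by (simp add: linear_diff[OF adjoint_linear[OF K_lin]] algebra_simps)
  have "i\<gamma> * (norm (xhat_of a b - \<gamma> *\<^sub>R adjoint K (p - b) - xs))\<^sup>2
      = i\<gamma> * (norm w)\<^sup>2 - 2 * (w \<bullet> adjoint K \<delta>) + \<gamma> * (norm (adjoint K \<delta>))\<^sup>2"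
    unfolding primal power2_norm_diff i\<gamma>_def using \<gamma>
    by (simp add: power_mult_distrib power2_eq_square field_simps)
  moreover have "\<gamma> * (norm (adjoint K (p - b)))\<^sup>2
      = \<gamma> * (norm (adjoint K \<delta>))\<^sup>2 - 2 * \<gamma> * (adjoint K e \<bullet> adjoint K \<delta>) + \<gamma> * (norm (adjoint K e))\<^sup>2"
    unfolding pb linear_diff[OF adjoint_linear[OF K_lin]]
    by (simp add: power2_norm_diff inner_commute algebra_simps)
  moreover have "i\<tau> * (norm (p - b))\<^sup>2 = i\<tau> * ((norm \<delta>)\<^sup>2 - 2 * (e \<bullet> \<delta>) + (norm e)\<^sup>2)"
    unfolding pb by (simp add: power2_norm_diff inner_commute)
  moreover note prox_step_monotone[where a = a and b = b, folded p_def w_def e_def \<delta>_def i\<tau>_def]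
  ultimately have expanded: "i\<gamma> * (norm (xhat_of a b - \<gamma> *\<^sub>R adjoint K (p - b) - xs))\<^sup>2
           + \<gamma> * (omran * (norm (p - b))\<^sup>2 - \<zeta> * (norm (adjoint K (p - b)))\<^sup>2)
           + C * (om * (norm e)\<^sup>2 + (norm \<delta>)\<^sup>2)
      \<le> i\<gamma> * (norm w)\<^sup>2 + \<gamma> * (1 - \<zeta>) * (norm (adjoint K (p - b)))\<^sup>2
        + (\<gamma> * omran - i\<tau>) * (norm (p - b))\<^sup>2 + (C * om + i\<tau>) * (norm e)\<^sup>2
        - \<gamma> * (norm (adjoint K e))\<^sup>2"
    unfolding C_def by (simp add: algebra_simps)
  have primal_term: "i\<gamma> * (norm w)\<^sup>2 \<le> rate * (i\<gamma> * (norm (a - xs))\<^sup>2)"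
    using gradient_step_rate[of a] \<gamma> unfolding w_def i\<gamma>_def by (simp add: field_simps)
  have "lyapunov a b = i\<gamma> * (norm (a - xs))\<^sup>2 + (1 + om) * C * (norm e)\<^sup>2"
    unfolding lyapunov_def C_def e_def i\<gamma>_def i\<tau>_def ..
  with expanded primal_term residual_terms_nonpos[of "p - b", folded i\<tau>_def]
    dual_contraction[of e, folded i\<tau>_def, folded C_def]
  show ?thesis
    unfolding i\<gamma>_def[symmetric] i\<tau>_def[symmetric] C_def[symmetric] e_def[symmetric] \<delta>_def[symmetric]
    by (simp add: algebra_simps)
qed

lemma lyapunov_deterministic_step:
  fixes a :: 'x and b :: 'u
  defines "\<rho> \<equiv> residual a b"
  shows "lyapunov (xhat_of a b - \<gamma> *\<^sub>R adjoint K \<rho>) (b + (1 / (1 + om)) *\<^sub>R \<rho>)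
           + \<gamma> * (omran * (norm \<rho>)\<^sup>2 - \<zeta> * (norm (adjoint K \<rho>))\<^sup>2)
           + (1 / \<tau> + 2 * \<mu>h) * om / (1 + om) * (norm \<rho>)\<^sup>2
         \<le> rate * lyapunov a b"
proof -
  define C where "C = 1 / \<tau> + 2 * \<mu>h"
  define k where "k = 1 / (1 + om)"
  define p where "p = prox \<tau> hs (b + \<tau> *\<^sub>R K (xhat_of a b))"
  have \<rho>: "\<rho> = p - b" unfolding \<rho>_def p_def residual_def ..
  define \<beta> where "\<beta> = (b - us) \<bullet> \<rho>"
  have k: "(1 + om) * k = 1" unfolding k_def using om by simp
  then have k': "k + om * k = 1" by (simp add: algebra_simps)
  have pus: "p - us = (b - us) + 1 *\<^sub>R \<rho>" unfolding \<rho> by simp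
  have "(norm (b + k *\<^sub>R \<rho> - us))\<^sup>2 = (norm (b - us))\<^sup>2 + 2 * k * \<beta> + k\<^sup>2 * (norm \<rho>)\<^sup>2"
    using power2_norm_add_scaleR[of "b - us" k \<rho>] unfolding \<beta>_def by (simp add: algebra_simps)
  then have "(1 + om) * C * (norm (b + k *\<^sub>R \<rho> - us))\<^sup>2 + C * om * k * (norm \<rho>)\<^sup>2
      = C * ((1 + om) * (norm (b - us))\<^sup>2 + 2 * ((1 + om) * k) * \<beta>
          + ((1 + om) * k) * k * (norm \<rho>)\<^sup>2 + om * k * (norm \<rho>)\<^sup>2)"
    by (simp add: algebra_simps power2_eq_square)
  also have "\<dots> = C * ((1 + om) * (norm (b - us))\<^sup>2 + 2 * \<beta> + (k + om * k) * (norm \<rho>)\<^sup>2)"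
    unfolding k by (simp add: algebra_simps)
  also have "\<dots> = C * (om * (norm (b - us))\<^sup>2 + (norm (p - us))\<^sup>2)"
    unfolding k' pus power2_norm_add_scaleR \<beta>_def by (simp add: algebra_simps)
  finally have dual: "(1 + om) * C * (norm (b + k *\<^sub>R \<rho> - us))\<^sup>2 + C * om * k * (norm \<rho>)\<^sup>2
      = C * (om * (norm (b - us))\<^sup>2 + (norm (p - us))\<^sup>2)" .
  have weight: "C * om / (1 + om) = C * om * k" unfolding k_def by simp
  show ?thesis
    using deterministic_step_ineq[where a = a and b = b] dual
    unfolding lyapunov_def[of "xhat_of a b - _"] \<rho> p_def[symmetric] C_def[symmetric] k_def[symmetric]
      weight
    by (simp add: algebra_simps)
qed

lemma lyapunov_bounds:
  "(norm (a - xs))\<^sup>2 \<le> \<gamma> * lyapunov a b"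
  "(norm (b - us))\<^sup>2 \<le> lyapunov a b / ((1 + om) * (1 / \<tau> + 2 * \<mu>h))"
proof -
  have C: "(1 + om) * (1 / \<tau> + 2 * \<mu>h) > 0" using om \<tau> hs_strong(1) by (simp add: add_pos_nonneg)
  then show "(norm (a - xs))\<^sup>2 \<le> \<gamma> * lyapunov a b"
    using \<gamma> unfolding lyapunov_def by (simp add: distrib_left)
  have "(norm (b - us))\<^sup>2 * ((1 + om) * (1 / \<tau> + 2 * \<mu>h)) \<le> lyapunov a b"
    using \<gamma> unfolding lyapunov_def by (simp add: mult_ac)
  then show "(norm (b - us))\<^sup>2 \<le> lyapunov a b / ((1 + om) * (1 / \<tau> + 2 * \<mu>h))"
    unfolding pos_le_divide_eq[OF C] .
qed

lemma integrable_lyapunov_iff: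
  assumes [measurable]: "A \<in> borel_measurable M" "B \<in> borel_measurable M"
  shows "integrable M (\<lambda>s. lyapunov (A s) (B s))
    \<longleftrightarrow> square_integrable M (\<lambda>s. A s - xs) \<and> square_integrable M (\<lambda>s. B s - us)"
proof
  assume int: "integrable M (\<lambda>s. lyapunov (A s) (B s))"
  have "integrable M (\<lambda>s. (norm (A s - xs))\<^sup>2)"
  proof (rule Bochner_Integration.integrable_bound[OF integrable_mult_right[OF int, of \<gamma>]])
    show "AE s in M. norm ((norm (A s - xs))\<^sup>2) \<le> norm (\<gamma> * lyapunov (A s) (B s))"
      using lyapunov_bounds(1) lyapunov_nonneg \<gamma> by (intro AE_I2) (simp add: abs_mult)
  qed measurable
  moreover have "integrable M (\<lambda>s. (norm (B s - us))\<^sup>2)"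
  proof (rule Bochner_Integration.integrable_bound[OF integrable_divide[OF int]])
    show "AE s in M. norm ((norm (B s - us))\<^sup>2)
        \<le> norm (lyapunov (A s) (B s) / ((1 + om) * (1 / \<tau> + 2 * \<mu>h)))"
      using lyapunov_bounds(2) lyapunov_nonneg om \<tau> hs_strong(1)
      by (intro AE_I2) (simp add: abs_mult abs_of_nonneg)
  qed measurable
  ultimately show "square_integrable M (\<lambda>s. A s - xs) \<and> square_integrable M (\<lambda>s. B s - us)"
    unfolding square_integrable_def by simp
next
  assume "square_integrable M (\<lambda>s. A s - xs) \<and> square_integrable M (\<lambda>s. B s - us)"
  then show "integrable M (\<lambda>s. lyapunov (A s) (B s))"
    unfolding lyapunov_def square_integrable_def by simp
qed

lemma lyapunov_tendsto_0_imp: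
  assumes "(\<lambda>t. lyapunov (X t) (U t)) \<longlonglongrightarrow> 0"
  shows "X \<longlonglongrightarrow> xs" "U \<longlonglongrightarrow> us" "(\<lambda>t. xhat_of (X t) (U t)) \<longlonglongrightarrow> xs"
proof -
  have "(\<lambda>t. (norm (X t - xs))\<^sup>2) \<longlonglongrightarrow> 0"
    by (rule tendsto_sandwich[OF always_eventually always_eventually tendsto_const
          tendsto_mult_right_zero[OF assms]]) (auto intro: lyapunov_bounds(1))
  from tendsto_real_sqrt[OF this] show X: "X \<longlonglongrightarrow> xs"
    by (simp add: LIM_zero_cancel tendsto_norm_zero_iff)
  have "(\<lambda>t. (norm (U t - us))\<^sup>2) \<longlonglongrightarrow> 0"
    by (rule tendsto_sandwich[OF always_eventually always_eventually tendsto_const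
          tendsto_divide_zero[OF assms]]) (auto intro: lyapunov_bounds(2))
  from tendsto_real_sqrt[OF this] show U: "U \<longlonglongrightarrow> us"
    by (simp add: LIM_zero_cancel tendsto_norm_zero_iff)
  have "isCont gf xs" using continuous_on_gf by (simp add: continuous_on_eq_continuous_at)
  from isCont_tendsto_compose[OF this X] bounded_linear.tendsto[OF bounded_linear_adjoint U]
  have "(\<lambda>t. xhat_of (X t) (U t)) \<longlonglongrightarrow> xhat_of xs us"
    unfolding xhat_of_def by (intro tendsto_intros X)
  then show "(\<lambda>t. xhat_of (X t) (U t)) \<longlonglongrightarrow> xs" by (simp add: xhat_of_saddle)
qed

end

section \<open>The random iteration\<close>

text \<open>\<open>Rr t\<close> is the random estimate \<open>\<R>\<^sup>t(r\<^sup>t)\<close> of the residual \<open>r t\<close>.\<close>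

locale randprox = randprox_parameters K f gf h Lf \<mu>f \<mu>h \<gamma> \<tau> om omran \<zeta> xs us
  for K :: "'x::euclidean_space \<Rightarrow> 'u::euclidean_space" and f gf h Lf \<mu>f \<mu>h \<gamma> \<tau> om omran \<zeta> xs us +
  fixes x0 :: 'x and u0 :: 'u and M :: "'s measure"
    and x xhat :: "nat \<Rightarrow> 's \<Rightarrow> 'x" and u r Rr :: "nat \<Rightarrow> 's \<Rightarrow> 'u"
  assumes M: "prob_space M"
    and init: "\<And>s. s \<in> space M \<Longrightarrow> x 0 s = x0 \<and> u 0 s = u0"
    and xhat_eq: "\<And>t s. s \<in> space M \<Longrightarrow>
           xhat t s = x t s - \<gamma> *\<^sub>R gf (x t s) - \<gamma> *\<^sub>R adjoint K (u t s)"
    and r_eq: "\<And>t s. s \<in> space M \<Longrightarrow>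
           r t s = prox \<tau> (fconj h) (u t s + \<tau> *\<^sub>R K (xhat t s)) - u t s"
    and u_step: "\<And>t s. s \<in> space M \<Longrightarrow> u (Suc t) s = u t s + (1 / (1 + om)) *\<^sub>R Rr t s"
    and x_step: "\<And>t s. s \<in> space M \<Longrightarrow>
           x (Suc t) s = xhat t s - (\<gamma> * (1 + om)) *\<^sub>R (adjoint K (u (Suc t) s) - adjoint K (u t s))"
    and R_measurable: "\<And>t. Rr t \<in> borel_measurable M"
    and R_unbiased: "\<And>t b. b \<in> Basis \<Longrightarrow> AE s in M.
           real_cond_exp M (natural_filtration M (\<lambda>i s. (x i s, u i s)) t) (\<lambda>s'. Rr t s' \<bullet> b) s
             = r t s \<bullet> b"
    and R_variance: "\<And>t. AE s in M.
           nn_cond_exp M (natural_filtration M (\<lambda>i s. (x i s, u i s)) t)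
             (\<lambda>s'. ennreal ((norm (Rr t s' - r t s'))\<^sup>2)) s
           \<le> ennreal (om * (norm (r t s))\<^sup>2)"
    and R_variance_adjoint: "\<And>t. AE s in M.
           nn_cond_exp M (natural_filtration M (\<lambda>i s. (x i s, u i s)) t)
             (\<lambda>s'. ennreal ((norm (adjoint K (Rr t s' - r t s')))\<^sup>2)) s
             + ennreal (\<zeta> * (norm (adjoint K (r t s)))\<^sup>2)
           \<le> ennreal (omran * (norm (r t s))\<^sup>2)"
begin

abbreviation "F t \<equiv> natural_filtration M (\<lambda>i s. (x i s, u i s)) t"

lemma xhat_eq_xhat_of: "s \<in> space M \<Longrightarrow> xhat t s = xhat_of (x t s) (u t s)"
  using xhat_eq unfolding xhat_of_def by simp

lemma r_eq_residual: "s \<in> space M \<Longrightarrow> r t s = residual (x t s) (u t s)"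
  using r_eq xhat_eq_xhat_of unfolding residual_def by simp

lemma x_Suc: "s \<in> space M \<Longrightarrow> x (Suc t) s = xhat t s - \<gamma> *\<^sub>R adjoint K (Rr t s)"
  using x_step u_step om linear_add[OF adjoint_linear[OF K_lin]] linear_cmul[OF adjoint_linear[OF K_lin]]
  by simp

lemma measurable_state: "x t \<in> borel_measurable M \<and> u t \<in> borel_measurable M"
proof (induction t)
  case 0
  have "x 0 \<in> borel_measurable M \<longleftrightarrow> (\<lambda>_. x0) \<in> borel_measurable M"
    using init by (intro measurable_cong) simp
  moreover have "u 0 \<in> borel_measurable M \<longleftrightarrow> (\<lambda>_. u0) \<in> borel_measurable M"
    using init by (intro measurable_cong) simp
  ultimately show ?case by simp
next
  case (Suc t)
  then have [measurable]: "x t \<in> borel_measurable M" "u t \<in> borel_measurable M" by auto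
  note R_measurable[measurable]
  have "x (Suc t) \<in> borel_measurable M
      \<longleftrightarrow> (\<lambda>s. xhat_of (x t s) (u t s) - \<gamma> *\<^sub>R adjoint K (Rr t s)) \<in> borel_measurable M"
    using x_Suc xhat_eq_xhat_of by (intro measurable_cong) simp
  moreover have "(\<lambda>s. xhat_of (x t s) (u t s) - \<gamma> *\<^sub>R adjoint K (Rr t s)) \<in> borel_measurable M"
    unfolding xhat_of_def by measurable
  moreover have "u (Suc t) \<in> borel_measurable M
      \<longleftrightarrow> (\<lambda>s. u t s + (1 / (1 + om)) *\<^sub>R Rr t s) \<in> borel_measurable M"
    using u_step by (intro measurable_cong) simp
  moreover have "(\<lambda>s. u t s + (1 / (1 + om)) *\<^sub>R Rr t s) \<in> borel_measurable M" by measurable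
  ultimately show ?case by simp
qed

lemma measurable_x [measurable]: "x t \<in> borel_measurable M"
  and measurable_u [measurable]: "u t \<in> borel_measurable M"
  using measurable_state by auto

lemma measurable_xhat_of [measurable]: "(\<lambda>s. xhat_of (x t s) (u t s)) \<in> borel_measurable M"
  unfolding xhat_of_def by measurable

lemma measurable_residual [measurable]: "(\<lambda>s. residual (x t s) (u t s)) \<in> borel_measurable M"
  unfolding residual_def xhat_of_def by measurable

lemma measurable_r [measurable]: "r t \<in> borel_measurable M"
proof -
  have "r t \<in> borel_measurable M \<longleftrightarrow> (\<lambda>s. residual (x t s) (u t s)) \<in> borel_measurable M"
    using r_eq_residual by (intro measurable_cong) simp
  then show ?thesis by simp
qed

lemma measurable_xhat [measurable]: "xhat t \<in> borel_measurable M"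
proof -
  have "xhat t \<in> borel_measurable M \<longleftrightarrow> (\<lambda>s. xhat_of (x t s) (u t s)) \<in> borel_measurable M"
    using xhat_eq_xhat_of by (intro measurable_cong) simp
  then show ?thesis by simp
qed

lemma sigma_finite_subalgebra_F: "sigma_finite_subalgebra M (F t)"
  using M by (rule sigma_finite_subalgebra_natural_filtration) simp

lemma measurable_state_F [measurable]: "(\<lambda>s. (x t s, u t s)) \<in> borel_measurable (F t)"
  by (rule measurable_natural_filtration) simp

lemma measurable_x_F [measurable]: "x t \<in> borel_measurable (F t)"
  and measurable_u_F [measurable]: "u t \<in> borel_measurable (F t)"
  using measurable_comp[OF measurable_state_F borel_measurable_continuous_onI[OF continuous_on_fst[OF continuous_on_id]]]
    measurable_comp[OF measurable_state_F borel_measurable_continuous_onI[OF continuous_on_snd[OF continuous_on_id]]]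
  by (simp_all add: o_def)

lemma square_integrable_xhat:
  assumes x: "square_integrable M (\<lambda>s. x t s - xs)" and u: "square_integrable M (\<lambda>s. u t s - us)"
  shows "square_integrable M (\<lambda>s. xhat t s - xs)"
proof -
  have "square_integrable M (\<lambda>s. gf (x t s) - gf xs)"
  proof (rule square_integrable_bound[OF square_integrable_scaleR[OF x, of Lf]])
    show "norm (gf (x t s) - gf xs) \<le> norm (Lf *\<^sub>R (x t s - xs))" for s
      using f_smooth Lf_pos by simp
  qed measurable
  then have "square_integrable M
      (\<lambda>s. (x t s - xs) - \<gamma> *\<^sub>R (gf (x t s) - gf xs) - \<gamma> *\<^sub>R adjoint K (u t s - us))"
    using square_integrable_diff[OF square_integrable_diff[OF x square_integrable_scaleR]
        square_integrable_scaleR[OF square_integrable_bounded_linear[OF u bounded_linear_adjoint]]]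
    by blast
  moreover have "square_integrable M (\<lambda>s. xhat t s - xs) \<longleftrightarrow> square_integrable M
      (\<lambda>s. (x t s - xs) - \<gamma> *\<^sub>R (gf (x t s) - gf xs) - \<gamma> *\<^sub>R adjoint K (u t s - us))"
  proof (rule square_integrable_cong)
    have "gf xs = - adjoint K us" using saddle(1) by (simp add: eq_neg_iff_add_eq_0)
    then show "xhat t s - xs = (x t s - xs) - \<gamma> *\<^sub>R (gf (x t s) - gf xs) - \<gamma> *\<^sub>R adjoint K (u t s - us)"
      if "s \<in> space M" for s
      by (simp add: xhat_eq[OF that] linear_diff[OF adjoint_linear[OF K_lin]] algebra_simps)
  qed
  ultimately show ?thesis by simp
qed

lemma square_integrable_r:
  assumes u: "square_integrable M (\<lambda>s. u t s - us)" and xhat: "square_integrable M (\<lambda>s. xhat t s - xs)"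
  shows "square_integrable M (r t)"
proof -
  have "square_integrable M (\<lambda>s. prox \<tau> hs (u t s + \<tau> *\<^sub>R K (xhat t s)) - us)"
  proof (rule square_integrable_bound)
    show "square_integrable M (\<lambda>s. (u t s - us) + \<tau> *\<^sub>R K (xhat t s - xs))"
      using square_integrable_add[OF u
          square_integrable_scaleR[OF square_integrable_bounded_linear[OF xhat bounded_linear_K]]] .
    have "(\<lambda>s. prox \<tau> hs (u t s + \<tau> *\<^sub>R K (xhat t s)) - us) \<in> borel_measurable M
        \<longleftrightarrow> (\<lambda>s. prox \<tau> hs (u t s + \<tau> *\<^sub>R K (xhat_of (x t s) (u t s))) - us) \<in> borel_measurable M"
      using xhat_eq_xhat_of by (intro measurable_cong) simp
    then show "(\<lambda>s. prox \<tau> hs (u t s + \<tau> *\<^sub>R K (xhat t s)) - us) \<in> borel_measurable M"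
      by simp
    show "norm (prox \<tau> hs (u t s + \<tau> *\<^sub>R K (xhat t s)) - us)
        \<le> norm ((u t s - us) + \<tau> *\<^sub>R K (xhat t s - xs))" for s
      using prox_dist_saddle[of "u t s + \<tau> *\<^sub>R K (xhat t s)"]
      by (simp add: linear_diff[OF K_lin] algebra_simps)
  qed
  then have "square_integrable M (\<lambda>s. (prox \<tau> hs (u t s + \<tau> *\<^sub>R K (xhat t s)) - us) - (u t s - us))"
    using u by (rule square_integrable_diff)
  moreover have "square_integrable M (r t) \<longleftrightarrow>
      square_integrable M (\<lambda>s. (prox \<tau> hs (u t s + \<tau> *\<^sub>R K (xhat t s)) - us) - (u t s - us))"
    using r_eq by (intro square_integrable_cong) simp
  ultimately show ?thesis by simp
qed

lemma square_integrable_iterates: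
  assumes "integrable M (\<lambda>s. lyapunov (x t s) (u t s))"
  shows "square_integrable M (\<lambda>s. x t s - xs)" and "square_integrable M (\<lambda>s. u t s - us)"
    and "square_integrable M (\<lambda>s. xhat t s - xs)" and "square_integrable M (r t)"
proof -
  show x: "square_integrable M (\<lambda>s. x t s - xs)" and u: "square_integrable M (\<lambda>s. u t s - us)"
    using assms integrable_lyapunov_iff[of "x t" M "u t"] by auto
  show xhat: "square_integrable M (\<lambda>s. xhat t s - xs)" by (rule square_integrable_xhat[OF x u])
  show "square_integrable M (r t)" by (rule square_integrable_r[OF u xhat])
qed

lemma noise_second_moments:
  assumes "integrable M (\<lambda>s. lyapunov (x t s) (u t s))"
  shows "square_integrable M (\<lambda>s. Rr t s - r t s)"
    and "(\<integral>s. (norm (Rr t s - r t s))\<^sup>2 \<partial>M) \<le> om * (\<integral>s. (norm (r t s))\<^sup>2 \<partial>M)"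
    and "(\<integral>s. (norm (adjoint K (Rr t s - r t s)))\<^sup>2 \<partial>M) + \<zeta> * (\<integral>s. (norm (adjoint K (r t s)))\<^sup>2 \<partial>M)
           \<le> omran * (\<integral>s. (norm (r t s))\<^sup>2 \<partial>M)"
proof -
  note R_measurable[measurable]
  have r: "integrable M (\<lambda>s. (norm (r t s))\<^sup>2)"
    using square_integrableD(2)[OF square_integrable_iterates(4)[OF assms]] .
  have measurable: "(\<lambda>s. (norm (Rr t s - r t s))\<^sup>2) \<in> borel_measurable M"
    "(\<lambda>s. (norm (adjoint K (Rr t s - r t s)))\<^sup>2) \<in> borel_measurable M"
    "(\<lambda>s. \<zeta> * (norm (adjoint K (r t s)))\<^sup>2) \<in> borel_measurable M"
    by measurable
  have "AE s in M. nn_cond_exp M (F t) (\<lambda>s. ennreal ((norm (Rr t s - r t s))\<^sup>2)) s + ennreal 0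
      \<le> ennreal (om * (norm (r t s))\<^sup>2)"
    using R_variance[of t] by simp
  note variance = integral_le_of_nn_cond_exp_le[OF sigma_finite_subalgebra_F measurable(1)
      borel_measurable_const zero_le_power2 order_refl mult_nonneg_nonneg[OF om zero_le_power2]
      integrable_mult_right[OF r] this]
  then show "square_integrable M (\<lambda>s. Rr t s - r t s)"
    unfolding square_integrable_def by simp
  show "(\<integral>s. (norm (Rr t s - r t s))\<^sup>2 \<partial>M) \<le> om * (\<integral>s. (norm (r t s))\<^sup>2 \<partial>M)"
    using variance(3) by simp
  show "(\<integral>s. (norm (adjoint K (Rr t s - r t s)))\<^sup>2 \<partial>M) + \<zeta> * (\<integral>s. (norm (adjoint K (r t s)))\<^sup>2 \<partial>M)
      \<le> omran * (\<integral>s. (norm (r t s))\<^sup>2 \<partial>M)"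
    using integral_le_of_nn_cond_exp_le(3)[OF sigma_finite_subalgebra_F measurable(2,3)
        zero_le_power2 mult_nonneg_nonneg[OF \<zeta>(1) zero_le_power2]
        mult_nonneg_nonneg[OF omran zero_le_power2] integrable_mult_right[OF r] R_variance_adjoint[of t]]
    by simp
qed

text \<open>\<open>(x_mean t, u_mean t)\<close> is the next iterate with \<open>Rr t\<close> replaced by its conditional mean
  \<open>r t\<close>.\<close>

definition x_mean :: "nat \<Rightarrow> 's \<Rightarrow> 'x" where
  "x_mean t s = xhat t s - \<gamma> *\<^sub>R adjoint K (r t s)"

definition u_mean :: "nat \<Rightarrow> 's \<Rightarrow> 'u" where
  "u_mean t s = u t s + (1 / (1 + om)) *\<^sub>R r t s"

definition cross_weight :: "nat \<Rightarrow> 's \<Rightarrow> 'u" where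
  "cross_weight t s = (2 * (1 / \<tau> + 2 * \<mu>h)) *\<^sub>R (u_mean t s - us) - 2 *\<^sub>R K (x_mean t s - xs)"

lemma lyapunov_Suc_eq:
  assumes "s \<in> space M"
  shows "lyapunov (x (Suc t) s) (u (Suc t) s)
           = lyapunov (x_mean t s) (u_mean t s) + cross_weight t s \<bullet> (Rr t s - r t s)
             + \<gamma> * (norm (adjoint K (Rr t s - r t s)))\<^sup>2
             + (1 / \<tau> + 2 * \<mu>h) / (1 + om) * (norm (Rr t s - r t s))\<^sup>2"
proof -
  have "x (Suc t) s = x_mean t s - \<gamma> *\<^sub>R adjoint K (Rr t s - r t s)"
    using x_Suc[OF assms] unfolding x_mean_def
    by (simp add: linear_diff[OF adjoint_linear[OF K_lin]] algebra_simps)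
  moreover have "u (Suc t) s = u_mean t s + (1 / (1 + om)) *\<^sub>R (Rr t s - r t s)"
    using u_step[OF assms] unfolding u_mean_def by (simp add: algebra_simps)
  ultimately show ?thesis unfolding cross_weight_def by (simp add: lyapunov_add_noise)
qed

lemma lyapunov_mean_le:
  assumes "s \<in> space M"
  shows "lyapunov (x_mean t s) (u_mean t s)
           + \<gamma> * (omran * (norm (r t s))\<^sup>2 - \<zeta> * (norm (adjoint K (r t s)))\<^sup>2)
           + (1 / \<tau> + 2 * \<mu>h) * om / (1 + om) * (norm (r t s))\<^sup>2
         \<le> rate * lyapunov (x t s) (u t s)"
  using lyapunov_deterministic_step[of "x t s" "u t s"]
  unfolding x_mean_def u_mean_def xhat_eq_xhat_of[OF assms] r_eq_residual[OF assms] .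

lemma square_integrable_mean:
  assumes "integrable M (\<lambda>s. lyapunov (x t s) (u t s))"
  shows "square_integrable M (\<lambda>s. x_mean t s - xs)" and "square_integrable M (\<lambda>s. u_mean t s - us)"
proof -
  note iterates = square_integrable_iterates[OF assms]
  have Kr: "square_integrable M (\<lambda>s. adjoint K (r t s))"
    by (rule square_integrable_bounded_linear[OF iterates(4) bounded_linear_adjoint])
  show "square_integrable M (\<lambda>s. x_mean t s - xs)"
    using square_integrable_diff[OF iterates(3) square_integrable_scaleR[OF Kr, of \<gamma>]]
    unfolding x_mean_def by (simp add: algebra_simps)
  show "square_integrable M (\<lambda>s. u_mean t s - us)"
    using square_integrable_add[OF iterates(2) square_integrable_scaleR[OF iterates(4), of "1 / (1 + om)"]]
    unfolding u_mean_def by (simp add: algebra_simps)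
qed

lemma integral_cross_term_eq_0:
  assumes "integrable M (\<lambda>s. lyapunov (x t s) (u t s))"
  shows "integrable M (\<lambda>s. cross_weight t s \<bullet> (Rr t s - r t s))"
    and "(\<integral>s. cross_weight t s \<bullet> (Rr t s - r t s) \<partial>M) = 0"
proof -
  note mean = square_integrable_mean[OF assms]
  have weight: "square_integrable M (cross_weight t)"
    unfolding cross_weight_def
    by (rule square_integrable_diff[OF square_integrable_scaleR[OF mean(2)]
          square_integrable_scaleR[OF square_integrable_bounded_linear[OF mean(1) bounded_linear_K]]])
  have "cross_weight t \<in> borel_measurable (F t) \<longleftrightarrow> (\<lambda>s.
      (2 * (1 / \<tau> + 2 * \<mu>h)) *\<^sub>R (u t s + (1 / (1 + om)) *\<^sub>R residual (x t s) (u t s) - us)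
      - 2 *\<^sub>R K (xhat_of (x t s) (u t s) - \<gamma> *\<^sub>R adjoint K (residual (x t s) (u t s)) - xs))
        \<in> borel_measurable (F t)"
    using xhat_eq_xhat_of r_eq_residual
    by (intro measurable_cong) (simp add: cross_weight_def x_mean_def u_mean_def)
  moreover have "(\<lambda>s.
      (2 * (1 / \<tau> + 2 * \<mu>h)) *\<^sub>R (u t s + (1 / (1 + om)) *\<^sub>R residual (x t s) (u t s) - us)
      - 2 *\<^sub>R K (xhat_of (x t s) (u t s) - \<gamma> *\<^sub>R adjoint K (residual (x t s) (u t s)) - xs))
        \<in> borel_measurable (F t)"
    unfolding residual_def xhat_of_def by measurable
  ultimately have weight_F: "cross_weight t \<in> borel_measurable (F t)" by simp
  note r = square_integrable_iterates(4)[OF assms]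
  have noise: "square_integrable M (\<lambda>s. Rr t s - r t s)" by (rule noise_second_moments(1)[OF assms])
  show "integrable M (\<lambda>s. cross_weight t s \<bullet> (Rr t s - r t s))"
    by (rule integrable_inner_square_integrable[OF weight noise])
  have "square_integrable M (\<lambda>s. (Rr t s - r t s) + r t s)" by (rule square_integrable_add[OF noise r])
  then have "square_integrable M (Rr t)" by simp
  from integral_inner_noise_eq_0[OF sigma_finite_subalgebra_F weight weight_F this r R_unbiased]
  show "(\<integral>s. cross_weight t s \<bullet> (Rr t s - r t s) \<partial>M) = 0" .
qed

lemma integral_lyapunov_Suc:
  assumes int: "integrable M (\<lambda>s. lyapunov (x t s) (u t s))"
  shows "integrable M (\<lambda>s. lyapunov (x (Suc t) s) (u (Suc t) s))"
    and "(\<integral>s. lyapunov (x (Suc t) s) (u (Suc t) s) \<partial>M)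
           = (\<integral>s. lyapunov (x_mean t s) (u_mean t s) \<partial>M)
             + \<gamma> * (\<integral>s. (norm (adjoint K (Rr t s - r t s)))\<^sup>2 \<partial>M)
             + (1 / \<tau> + 2 * \<mu>h) / (1 + om) * (\<integral>s. (norm (Rr t s - r t s))\<^sup>2 \<partial>M)"
proof -
  have [measurable]: "x_mean t \<in> borel_measurable M" "u_mean t \<in> borel_measurable M"
    unfolding x_mean_def u_mean_def by measurable
  have "integrable M (\<lambda>s. lyapunov (x_mean t s) (u_mean t s))"
    using square_integrable_mean[OF int] by (simp add: integrable_lyapunov_iff)
  moreover note cross = integral_cross_term_eq_0[OF int]
  moreover note noise = noise_second_moments(1)[OF int]
  moreover note square_integrableD(2)[OF noise]
    square_integrableD(2)[OF square_integrable_bounded_linear[OF noise bounded_linear_adjoint]]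
  ultimately have integrable: "integrable M (\<lambda>s. lyapunov (x_mean t s) (u_mean t s)
      + cross_weight t s \<bullet> (Rr t s - r t s) + \<gamma> * (norm (adjoint K (Rr t s - r t s)))\<^sup>2
      + (1 / \<tau> + 2 * \<mu>h) / (1 + om) * (norm (Rr t s - r t s))\<^sup>2)"
    and integral: "(\<integral>s. lyapunov (x_mean t s) (u_mean t s)
      + cross_weight t s \<bullet> (Rr t s - r t s) + \<gamma> * (norm (adjoint K (Rr t s - r t s)))\<^sup>2
      + (1 / \<tau> + 2 * \<mu>h) / (1 + om) * (norm (Rr t s - r t s))\<^sup>2 \<partial>M)
      = (\<integral>s. lyapunov (x_mean t s) (u_mean t s) \<partial>M)
        + \<gamma> * (\<integral>s. (norm (adjoint K (Rr t s - r t s)))\<^sup>2 \<partial>M)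
        + (1 / \<tau> + 2 * \<mu>h) / (1 + om) * (\<integral>s. (norm (Rr t s - r t s))\<^sup>2 \<partial>M)"
    by simp_all
  from integrable show "integrable M (\<lambda>s. lyapunov (x (Suc t) s) (u (Suc t) s))"
    using lyapunov_Suc_eq by (subst Bochner_Integration.integrable_cong[OF refl]) auto
  show "(\<integral>s. lyapunov (x (Suc t) s) (u (Suc t) s) \<partial>M)
      = (\<integral>s. lyapunov (x_mean t s) (u_mean t s) \<partial>M)
        + \<gamma> * (\<integral>s. (norm (adjoint K (Rr t s - r t s)))\<^sup>2 \<partial>M)
        + (1 / \<tau> + 2 * \<mu>h) / (1 + om) * (\<integral>s. (norm (Rr t s - r t s))\<^sup>2 \<partial>M)"
    unfolding integral[symmetric] using lyapunov_Suc_eq by (intro Bochner_Integration.integral_cong) auto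
qed

lemma expected_lyapunov_step:
  assumes int: "integrable M (\<lambda>s. lyapunov (x t s) (u t s))"
  shows "(\<integral>s. lyapunov (x (Suc t) s) (u (Suc t) s) \<partial>M) \<le> rate * (\<integral>s. lyapunov (x t s) (u t s) \<partial>M)"
proof -
  define C where "C = 1 / \<tau> + 2 * \<mu>h"
  have [measurable]: "x_mean t \<in> borel_measurable M" "u_mean t \<in> borel_measurable M"
    unfolding x_mean_def u_mean_def by measurable
  have integrable_mean: "integrable M (\<lambda>s. lyapunov (x_mean t s) (u_mean t s))"
    using square_integrable_mean[OF int] by (simp add: integrable_lyapunov_iff)
  note r = square_integrable_iterates(4)[OF int]
  note integrable_r = square_integrableD(2)[OF r]
    square_integrableD(2)[OF square_integrable_bounded_linear[OF r bounded_linear_adjoint]]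
  have "(\<integral>s. lyapunov (x (Suc t) s) (u (Suc t) s) \<partial>M)
      \<le> (\<integral>s. lyapunov (x_mean t s) (u_mean t s) \<partial>M)
        + \<gamma> * (omran * (\<integral>s. (norm (r t s))\<^sup>2 \<partial>M) - \<zeta> * (\<integral>s. (norm (adjoint K (r t s)))\<^sup>2 \<partial>M))
        + C / (1 + om) * (om * (\<integral>s. (norm (r t s))\<^sup>2 \<partial>M))"
  proof -
    have "0 \<le> C / (1 + om)" unfolding C_def using \<tau> om hs_strong(1) by simp
    then show ?thesis
      unfolding integral_lyapunov_Suc(2)[OF int, folded C_def]
      using noise_second_moments(2,3)[OF int] \<gamma>
      by (intro add_mono mult_left_mono order_refl) auto
  qed
  also have "\<dots> = (\<integral>s. lyapunov (x_mean t s) (u_mean t s) + \<gamma> * (omran * (norm (r t s))\<^sup>2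
      - \<zeta> * (norm (adjoint K (r t s)))\<^sup>2) + C * om / (1 + om) * (norm (r t s))\<^sup>2 \<partial>M)"
    using integrable_mean integrable_r by (simp add: algebra_simps)
  also have "\<dots> \<le> (\<integral>s. rate * lyapunov (x t s) (u t s) \<partial>M)"
    using integrable_mean integrable_r int lyapunov_mean_le unfolding C_def
    by (intro integral_mono) auto
  finally show ?thesis by simp
qed

lemma expected_lyapunov_bound:
  "integrable M (\<lambda>s. lyapunov (x t s) (u t s))
     \<and> (\<integral>s. lyapunov (x t s) (u t s) \<partial>M) \<le> rate ^ t * lyapunov x0 u0"
proof (induction t)
  case 0
  interpret prob_space M by (rule M)
  have "integrable M (\<lambda>s. lyapunov (x 0 s) (u 0 s)) \<longleftrightarrow> integrable M (\<lambda>s. lyapunov x0 u0)"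
    using init by (intro Bochner_Integration.integrable_cong) auto
  moreover have "(\<integral>s. lyapunov (x 0 s) (u 0 s) \<partial>M) = (\<integral>s. lyapunov x0 u0 \<partial>M)"
    using init by (intro Bochner_Integration.integral_cong) auto
  ultimately show ?case by (simp add: prob_space)
next
  case (Suc t)
  then have "(\<integral>s. lyapunov (x (Suc t) s) (u (Suc t) s) \<partial>M) \<le> rate * (\<integral>s. lyapunov (x t s) (u t s) \<partial>M)"
    by (intro expected_lyapunov_step) blast
  also have "\<dots> \<le> rate * (rate ^ t * lyapunov x0 u0)"
    using Suc by (intro mult_left_mono[OF _ rate_nonneg]) blast
  also have "\<dots> = rate ^ Suc t * lyapunov x0 u0" by (simp only: power_Suc mult.assoc)
  finally show ?case using Suc integral_lyapunov_Suc(1) by blast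
qed

lemma measurable_lyapunov [measurable]: "(\<lambda>s. lyapunov (x t s) (u t s)) \<in> borel_measurable M"
  unfolding lyapunov_def by measurable

lemma nn_integral_lyapunov_le:
  "(\<integral>\<^sup>+s. ennreal (lyapunov (x t s) (u t s)) \<partial>M) \<le> ennreal (rate ^ t * lyapunov x0 u0)"
  using expected_lyapunov_bound[of t] lyapunov_nonneg
  by (simp add: nn_integral_eq_integral ennreal_leI)

lemma AE_iterates_tendsto:
  "AE s in M. (\<lambda>t. x t s) \<longlonglongrightarrow> xs \<and> (\<lambda>t. xhat t s) \<longlonglongrightarrow> xs \<and> (\<lambda>t. u t s) \<longlonglongrightarrow> us"
proof -
  have "summable (\<lambda>t. rate ^ t * lyapunov x0 u0)"
    using rate_nonneg rate_lt_1 by (intro summable_mult2 summable_geometric) simp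
  then have "AE s in M. (\<lambda>t. lyapunov (x t s) (u t s)) \<longlonglongrightarrow> 0"
    using nn_integral_lyapunov_le lyapunov_nonneg rate_nonneg
    by (intro AE_tendsto_zero_of_nn_integral_le_summable) auto
  with AE_space show ?thesis
  proof eventually_elim
    case (elim s)
    then show ?case
      using lyapunov_tendsto_0_imp[of "\<lambda>t. x t s" "\<lambda>t. u t s"] xhat_eq_xhat_of by simp
  qed
qed

end

theorem theorem2:
  fixes K :: "'x::euclidean_space \<Rightarrow> 'u::euclidean_space"
    and f :: "'x \<Rightarrow> real" and gf :: "'x \<Rightarrow> 'x"
    and h :: "'u \<Rightarrow> ereal"
    and Lf \<mu>f \<mu>h \<gamma> \<tau> om omran \<zeta> :: real
    and xs :: 'x and us :: 'u and x0 :: 'x and u0 :: 'u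
    and M :: "'s measure"
    and x xhat :: "nat \<Rightarrow> 's \<Rightarrow> 'x" and u r Rr :: "nat \<Rightarrow> 's \<Rightarrow> 'u"
  defines "hs \<equiv> fconj h"
  defines "F \<equiv> natural_filtration M (\<lambda>i s. (x i s, u i s))"
  defines "lam \<equiv> lambda_min (K \<circ> adjoint K)"
  defines "Psi \<equiv> (\<lambda>t s. (1 / \<gamma>) * (norm (x t s - xs))\<^sup>2
                        + (1 + om) * (1 / \<tau> + 2 * \<mu>h) * (norm (u t s - us))\<^sup>2)"
  defines "c \<equiv> max (max ((1 - \<gamma> * \<mu>f)\<^sup>2) ((\<gamma> * Lf - 1)\<^sup>2))
                 (1 - (2 * \<tau> * \<mu>h + \<gamma> * \<tau> * lam) / ((1 + om) * (1 + 2 * \<tau> * \<mu>h)))"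
  assumes K_lin: "linear K" and K_nz: "K \<noteq> (\<lambda>_. 0)"
    and f_convex: "convex_on UNIV f"
    and f_grad: "\<And>y. (f has_derivative (\<lambda>d. gf y \<bullet> d)) (at y)"
    and f_smooth: "\<And>y z. norm (gf y - gf z) \<le> Lf * norm (y - z)"
    and f_strong: "\<mu>f \<ge> 0" "convex_on UNIV (\<lambda>y. f y - \<mu>f / 2 * (norm y)\<^sup>2)"
    and h_proper: "proper_fun h" and h_closed: "closed_fun h" and h_convex: "convex_fun h"
    and hs_strong: "\<mu>h \<ge> 0" "strongly_convex_fun \<mu>h hs"
    and saddle: "gf xs + adjoint K us = 0" "K xs \<in> subdiff hs us"
    and \<mu>f_pos: "\<mu>f > 0"
    and lam_or_\<mu>h: "lam > 0 \<or> \<mu>h > 0"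
    and \<gamma>: "0 < \<gamma>" "\<gamma> < 2 / Lf" and \<tau>: "\<tau> > 0"
    and stepsize: "\<gamma> * \<tau> * ((1 - \<zeta>) * (onorm K)\<^sup>2 + omran) \<le> 1"
    and om: "om \<ge> 0" and omran: "omran \<ge> 0" and \<zeta>: "0 \<le> \<zeta>" "\<zeta> \<le> 1"
    and M: "prob_space M"
    and init: "\<And>s. s \<in> space M \<Longrightarrow> x 0 s = x0 \<and> u 0 s = u0"
    and xhat_def: "\<And>t s. s \<in> space M \<Longrightarrow>
           xhat t s = x t s - \<gamma> *\<^sub>R gf (x t s) - \<gamma> *\<^sub>R adjoint K (u t s)"
    and r_def: "\<And>t s. s \<in> space M \<Longrightarrow>
           r t s = prox \<tau> hs (u t s + \<tau> *\<^sub>R K (xhat t s)) - u t s"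
    and u_step: "\<And>t s. s \<in> space M \<Longrightarrow> u (Suc t) s = u t s + (1 / (1 + om)) *\<^sub>R Rr t s"
    and x_step: "\<And>t s. s \<in> space M \<Longrightarrow>
           x (Suc t) s = xhat t s - (\<gamma> * (1 + om)) *\<^sub>R (adjoint K (u (Suc t) s) - adjoint K (u t s))"
    and R_meas: "\<And>t. Rr t \<in> borel_measurable M"
    and R_int: "\<And>t. integrable M (Rr t)"
    and R_unbiased: "\<And>t b. b \<in> Basis \<Longrightarrow>
           AE s in M. real_cond_exp M (F t) (\<lambda>s'. Rr t s' \<bullet> b) s = r t s \<bullet> b"
    and R_var: "\<And>t. AE s in M. nn_cond_exp M (F t) (\<lambda>s'. ennreal ((norm (Rr t s' - r t s'))\<^sup>2)) s
                               \<le> ennreal (om * (norm (r t s))\<^sup>2)"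
    and R_var_K: "\<And>t. AE s in M.
           nn_cond_exp M (F t) (\<lambda>s'. ennreal ((norm (adjoint K (Rr t s' - r t s')))\<^sup>2)) s
             + ennreal (\<zeta> * (norm (adjoint K (r t s)))\<^sup>2)
           \<le> ennreal (omran * (norm (r t s))\<^sup>2)"
  shows "c < 1
         \<and> (\<forall>t. (\<integral>\<^sup>+ s. ennreal (Psi t s) \<partial>M)
                   \<le> ennreal (c ^ t * ((1 / \<gamma>) * (norm (x0 - xs))\<^sup>2
                        + (1 + om) * (1 / \<tau> + 2 * \<mu>h) * (norm (u0 - us))\<^sup>2)))
         \<and> (AE s in M. (\<lambda>t. x t s) \<longlonglongrightarrow> xs)
         \<and> (AE s in M. (\<lambda>t. xhat t s) \<longlonglongrightarrow> xs)
         \<and> (AE s in M. (\<lambda>t. u t s) \<longlonglongrightarrow> us)"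
proof -
  note assumptions = K_lin f_grad f_smooth f_strong(2) h_proper hs_strong[unfolded hs_def]
    saddle[unfolded hs_def] \<mu>f_pos lam_or_\<mu>h[unfolded lam_def] \<gamma> \<tau> stepsize om omran \<zeta> M init
    xhat_def r_def[unfolded hs_def] u_step x_step R_meas R_unbiased[unfolded F_def]
    R_var[unfolded F_def] R_var_K[unfolded F_def]
  interpret randprox K f gf h Lf \<mu>f \<mu>h \<gamma> \<tau> om omran \<zeta> xs us x0 u0 M x xhat u r Rr
    by (intro randprox.intro randprox_parameters.intro randprox_axioms.intro) (fact assumptions)+
  have Psi: "Psi t s = lyapunov (x t s) (u t s)" for t s unfolding Psi_def lyapunov_def ..
  show ?thesis
  proof (intro conjI allI)
    show "c < 1" unfolding c_def lam_def by (rule rate_lt_1)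
    show "(\<integral>\<^sup>+ s. ennreal (Psi t s) \<partial>M) \<le> ennreal (c ^ t * ((1 / \<gamma>) * (norm (x0 - xs))\<^sup>2
        + (1 + om) * (1 / \<tau> + 2 * \<mu>h) * (norm (u0 - us))\<^sup>2))" for t
      using nn_integral_lyapunov_le[of t] unfolding Psi c_def lam_def lyapunov_def .
  qed (use AE_iterates_tendsto in \<open>auto elim: eventually_mono\<close>)
qed

end
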